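(* Let $G$ be a discrete group and $P\subset G$ a subsemigroup with $e\in P$ and $PP^{-1}=G$. Let $V:P\to B(\mathcal{H})$ be an isometric representation with commuting range projections, let $\mathcal{A}$ be the (commutative, unital) $C^*$-algebra generated by $\{E_g:g\in G\}$ and $\Omega$ its spectrum, identified with a subset of $\{0,1\}^G\cong\mathcal{P}(G)$ via $\chi\mapsto A_\chi:=\{g\in G:\chi(E_g)=1\}$ (this identification is a $P$-equivariant topological embedding, where $P$ acts on $\mathcal{P}(G)$ by $A\cdot a=Aa$). Then: (1) for $A\in\Omega$ and $a\in P$, $Aa^{-1}\in\Omega$ if and only if $a\in A$; (2) for $A\in\Omega$ and $g\in G$, $Ag\in\Omega$ if and only if $g^{-1}\in A$; (3) the action map $\Omega\times P\to\Omega$, $(A,a)\mapsto Aa$, is open.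
   Context: An isometric representation with commuting range projections is a map $V:P\to B(\mathcal{H})$ such that each $V_a$ is an isometry, $V_aV_b=V_{ba}$ for $a,b\in P$, and the projections $E_a:=V_aV_a^*$ pairwise commute. For $g=ab^{-1}$ ($a,b\in P$) put $W_g:=V_b^*V_a$ (independent of the choice of $a,b$) and $E_g:=W_gW_g^*$; these are pairwise commuting projections. For $a\in P$, $\alpha_a(T):=V_a^*TV_a$ maps $\mathcal{A}$ into itself as a unital $*$-homomorphism, and $P$ acts on $\Omega$ on the right by $(\chi\cdot a)(T)=\chi(\alpha_a(T))$. $\mathcal{P}(G)\cong\{0,1\}^G$ carries the product topology. *)

theory Defs
  imports "HOL-Analysis.Analysis"
begin

type_synonym 'i vec = "'i \<Rightarrow> complex"
type_synonym 'i op = "'i vec \<Rightarrow> 'i vec"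

definition l2 :: "'i vec set" where
  "l2 = {x. (\<lambda>i. (cmod (x i))\<^sup>2) summable_on UNIV}"

definition l2inner :: "'i vec \<Rightarrow> 'i vec \<Rightarrow> complex" where
  "l2inner x y = (\<Sum>\<^sub>\<infinity>i. cnj (x i) * y i)"

definition l2norm :: "'i vec \<Rightarrow> real" where
  "l2norm x = sqrt (\<Sum>\<^sub>\<infinity>i. (cmod (x i))\<^sup>2)"

text \<open>Bounded linear operators on l2(I); extended by 0 outside l2 so that
  equality of operators is equality of functions.\<close>
definition bop :: "'i op \<Rightarrow> bool" where
  "bop T \<longleftrightarrow> (\<forall>x\<in>l2. T x \<in> l2)
     \<and> (\<forall>x\<in>l2. \<forall>y\<in>l2. \<forall>c. T (\<lambda>i. x i + c * y i) = (\<lambda>i. T x i + c * T y i))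
     \<and> (\<exists>K. \<forall>x\<in>l2. l2norm (T x) \<le> K * l2norm x)
     \<and> (\<forall>x. x \<notin> l2 \<longrightarrow> T x = (\<lambda>i. 0))"

definition Id_op :: "'i op" where
  "Id_op x = (if x \<in> l2 then x else (\<lambda>i. 0))"

definition adj :: "'i op \<Rightarrow> 'i op" where
  "adj T = (THE S. bop S \<and> (\<forall>x\<in>l2. \<forall>y\<in>l2. l2inner (T x) y = l2inner x (S y)))"

definition opnorm :: "'i op \<Rightarrow> real" where
  "opnorm T = Sup {l2norm (T x) | x. x \<in> l2 \<and> l2norm x \<le> 1}"

definition op_add :: "'i op \<Rightarrow> 'i op \<Rightarrow> 'i op" where
  "op_add T U = (\<lambda>x i. T x i + U x i)"

definition op_scale :: "complex \<Rightarrow> 'i op \<Rightarrow> 'i op" where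
  "op_scale c T = (\<lambda>x i. c * T x i)"

definition op_diff :: "'i op \<Rightarrow> 'i op \<Rightarrow> 'i op" where
  "op_diff T U = (\<lambda>x i. T x i - U x i)"

definition isometry :: "'i op \<Rightarrow> bool" where
  "isometry T \<longleftrightarrow> bop T \<and> adj T \<circ> T = Id_op"

definition cstar_gen :: "'i op set \<Rightarrow> 'i op set" where
  "cstar_gen S = \<Inter> {B. S \<subseteq> B \<and> Id_op \<in> B \<and> B \<subseteq> Collect bop
      \<and> (\<forall>T\<in>B. \<forall>U\<in>B. op_add T U \<in> B \<and> T \<circ> U \<in> B)
      \<and> (\<forall>c. \<forall>T\<in>B. op_scale c T \<in> B)
      \<and> (\<forall>T\<in>B. adj T \<in> B)
      \<and> (\<forall>f T. (\<forall>n. f n \<in> B) \<and> bop T \<and> (\<lambda>n. opnorm (op_diff (f n) T)) \<longlonglongrightarrow> 0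
               \<longrightarrow> T \<in> B)}"

definition characters :: "'i op set \<Rightarrow> ('i op \<Rightarrow> complex) set" where
  "characters B = {chr. (\<forall>T\<in>B. \<forall>U\<in>B. chr (op_add T U) = chr T + chr U
                                   \<and> chr (T \<circ> U) = chr T * chr U)
                    \<and> (\<forall>c. \<forall>T\<in>B. chr (op_scale c T) = c * chr T)
                    \<and> (\<exists>T\<in>B. chr T \<noteq> 0)}"

definition Wop :: "('g \<Rightarrow> 'g \<Rightarrow> 'g) \<Rightarrow> ('g \<Rightarrow> 'g) \<Rightarrow> 'g set \<Rightarrow> ('g \<Rightarrow> 'i op) \<Rightarrow> 'g \<Rightarrow> 'i op" where
  "Wop gm ginv P V g = (SOME T. \<exists>a\<in>P. \<exists>b\<in>P. g = gm a (ginv b) \<and> T = adj (V b) \<circ> V a)"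

definition Eop :: "('g \<Rightarrow> 'g \<Rightarrow> 'g) \<Rightarrow> ('g \<Rightarrow> 'g) \<Rightarrow> 'g set \<Rightarrow> ('g \<Rightarrow> 'i op) \<Rightarrow> 'g \<Rightarrow> 'i op" where
  "Eop gm ginv P V g = Wop gm ginv P V g \<circ> adj (Wop gm ginv P V g)"

definition Aalg :: "('g \<Rightarrow> 'g \<Rightarrow> 'g) \<Rightarrow> ('g \<Rightarrow> 'g) \<Rightarrow> 'g set \<Rightarrow> ('g \<Rightarrow> 'i op) \<Rightarrow> 'i op set" where
  "Aalg gm ginv P V = cstar_gen (range (Eop gm ginv P V))"

definition Omega :: "('g \<Rightarrow> 'g \<Rightarrow> 'g) \<Rightarrow> ('g \<Rightarrow> 'g) \<Rightarrow> 'g set \<Rightarrow> ('g \<Rightarrow> 'i op) \<Rightarrow> 'g set set" where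
  "Omega gm ginv P V =
     {{g. chr (Eop gm ginv P V g) = 1} | chr. chr \<in> characters (Aalg gm ginv P V)}"

definition powset_top :: "'g set topology" where
  "powset_top = topology (\<lambda>U. open ((\<lambda>A g. g \<in> A) ` U))"

definition rtrans :: "('g \<Rightarrow> 'g \<Rightarrow> 'g) \<Rightarrow> 'g set \<Rightarrow> 'g \<Rightarrow> 'g set" where
  "rtrans gm A g = (\<lambda>x. gm x g) ` A"

end

theory Submission
  imports Defs
begin

text \<open>
  A character chi of the commutative algebra A is recorded by the set of g with chi(E_g) = 1.
  For a in P, the sandwich map T |-> V_a T V_a^* and alpha_a(T) = V_a^* T V_a leave A invariant
  and are multiplicative on A (for alpha_a because the range projection V_a V_a^* = E_a lies in
  the commutative algebra A). Since V_a E_g V_a^* = E_a E_{ga} and V_a^* E_g V_a = E_{ga^-1},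
  composing chi with them gives characters -- the first one nonzero exactly when chi(E_a) = 1 --
  whose sets are A a^-1 and A a. As E_e is the identity, every set in Omega contains e, which
  yields the converse implications; part (2) follows by writing g = c d^-1 with c, d in P.
  For (3), part (1) shows that the image of a relatively open set Y \<inter> Omega under right
  translation by a is {B \<in> Omega. a \<in> B \<and> B a^-1 \<in> Y}, which is open in the product topology.
\<close>

section \<open>The sequence space l2\<close>

definition l2sqnorm :: "'i vec \<Rightarrow> real" where
  "l2sqnorm x = (\<Sum>\<^sub>\<infinity>i. (cmod (x i))\<^sup>2)"

lemma l2norm_eq_sqrt: "l2norm x = sqrt (l2sqnorm x)"
  by (simp add: l2norm_def l2sqnorm_def)

lemma l2sqnorm_nonneg: "l2sqnorm x \<ge> 0"
  unfolding l2sqnorm_def by (rule infsum_nonneg) simp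

lemma l2norm_nonneg: "l2norm x \<ge> 0"
  by (simp add: l2norm_eq_sqrt l2sqnorm_nonneg)

lemma l2norm_power2: "(l2norm x)\<^sup>2 = l2sqnorm x"
  by (simp add: l2norm_eq_sqrt l2sqnorm_nonneg)

lemma l2_zero [simp]: "(\<lambda>i. 0) \<in> l2"
  by (simp add: l2_def)

lemma l2_finite_support:
  assumes "finite F" "\<And>i. i \<notin> F \<Longrightarrow> x i = 0"
  shows "x \<in> l2"
  unfolding l2_def mem_Collect_eq
  by (rule finite_nonzero_values_imp_summable_on) (use assms in \<open>auto intro: finite_subset\<close>)

lemma l2_add:
  assumes "x \<in> l2" "y \<in> l2"
  shows "(\<lambda>i. x i + y i) \<in> l2"
proof -
  have bound: "(cmod (a + b))\<^sup>2 \<le> 2 * (cmod a)\<^sup>2 + 2 * (cmod b)\<^sup>2" for a b :: complex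
  proof -
    have "(cmod (a + b))\<^sup>2 \<le> (cmod a + cmod b)\<^sup>2"
      by (simp add: power_mono norm_triangle_ineq)
    also have "\<dots> \<le> 2 * (cmod a)\<^sup>2 + 2 * (cmod b)\<^sup>2"
      by (smt (verit) sum_squares_bound power2_sum)
    finally show ?thesis .
  qed
  have "(\<lambda>i. 2 * (cmod (x i))\<^sup>2 + 2 * (cmod (y i))\<^sup>2) summable_on UNIV"
    using assms unfolding l2_def by (intro summable_on_add summable_on_cmult_right) auto
  thus ?thesis
    unfolding l2_def mem_Collect_eq by (rule summable_on_comparison_test) (auto simp: bound)
qed

lemma l2_scale:
  assumes "x \<in> l2"
  shows "(\<lambda>i. c * x i) \<in> l2"
proof -
  have "(\<lambda>i. (cmod c)\<^sup>2 * (cmod (x i))\<^sup>2) summable_on UNIV"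
    using assms unfolding l2_def by (intro summable_on_cmult_right) auto
  thus ?thesis unfolding l2_def by (simp add: norm_mult power_mult_distrib)
qed

lemma l2_add_scaled:
  "x \<in> l2 \<Longrightarrow> y \<in> l2 \<Longrightarrow> (\<lambda>i. x i + c * y i) \<in> l2"
  by (simp add: l2_add l2_scale)

lemma l2_diff: "x \<in> l2 \<Longrightarrow> y \<in> l2 \<Longrightarrow> (\<lambda>i. x i - y i) \<in> l2"
  using l2_add_scaled[of x y "-1"] by simp

lemma l2_norm_mult_summable:
  assumes "x \<in> l2" "y \<in> l2"
  shows "(\<lambda>i. cmod (x i) * cmod (y i)) summable_on UNIV"
proof -
  have bound: "cmod a * cmod b \<le> (cmod a)\<^sup>2 + (cmod b)\<^sup>2" for a b :: complex
  proof -
    have "0 \<le> (cmod a - cmod b)\<^sup>2" by simp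
    hence "2 * (cmod a * cmod b) \<le> (cmod a)\<^sup>2 + (cmod b)\<^sup>2"
      by (simp add: power2_diff algebra_simps)
    thus ?thesis using mult_nonneg_nonneg[OF norm_ge_zero norm_ge_zero, of a b] by linarith
  qed
  have "(\<lambda>i. (cmod (x i))\<^sup>2 + (cmod (y i))\<^sup>2) summable_on UNIV"
    using assms unfolding l2_def by (intro summable_on_add) auto
  thus ?thesis by (rule summable_on_comparison_test) (auto simp: bound)
qed

lemma l2inner_summable:
  "x \<in> l2 \<Longrightarrow> y \<in> l2 \<Longrightarrow> (\<lambda>i. cnj (x i) * y i) summable_on UNIV"
  unfolding summable_on_iff_abs_summable_on_complex
  using l2_norm_mult_summable by (simp add: norm_mult)

lemma l2sqnorm_eq_0D:
  assumes "x \<in> l2" "l2sqnorm x = 0"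
  shows "x = (\<lambda>i. 0)"
proof
  fix i
  have "(cmod (x i))\<^sup>2 = 0"
    by (rule nonneg_infsum_le_0D[where A=UNIV]) (use assms in \<open>auto simp: l2sqnorm_def l2_def\<close>)
  thus "x i = 0" by simp
qed

lemma l2norm_eq_0D: "x \<in> l2 \<Longrightarrow> l2norm x = 0 \<Longrightarrow> x = (\<lambda>i. 0)"
  using l2sqnorm_eq_0D l2sqnorm_nonneg by (simp add: l2norm_eq_sqrt)

lemma sum_power2_le_l2sqnorm:
  "x \<in> l2 \<Longrightarrow> finite F \<Longrightarrow> (\<Sum>i\<in>F. (cmod (x i))\<^sup>2) \<le> l2sqnorm x"
  unfolding l2sqnorm_def l2_def by (rule finite_sum_le_infsum) auto

lemma l2_norm_mult_infsum_le:
  assumes "x \<in> l2" "y \<in> l2"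
  shows "(\<Sum>\<^sub>\<infinity>i. cmod (x i) * cmod (y i)) \<le> l2norm x * l2norm y"
proof (rule infsum_le_finite_sums[OF l2_norm_mult_summable[OF assms]])
  fix F :: "'a set" assume F: "finite F"
  have L2_le: "L2_set (\<lambda>i. cmod (z i)) F \<le> l2norm z" if "z \<in> l2" for z
    unfolding L2_set_def l2norm_eq_sqrt
    using sum_power2_le_l2sqnorm[OF that F] by (simp add: real_sqrt_le_mono)
  have "(\<Sum>i\<in>F. cmod (x i) * cmod (y i))
      \<le> L2_set (\<lambda>i. cmod (x i)) F * L2_set (\<lambda>i. cmod (y i)) F"
    using L2_set_mult_ineq[of "\<lambda>i. cmod (x i)" "\<lambda>i. cmod (y i)" F] by simp
  also have "\<dots> \<le> l2norm x * l2norm y"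
    by (intro mult_mono L2_le assms l2norm_nonneg) simp
  finally show "(\<Sum>i\<in>F. cmod (x i) * cmod (y i)) \<le> l2norm x * l2norm y" .
qed

lemma l2inner_Cauchy_Schwarz:
  assumes "x \<in> l2" "y \<in> l2"
  shows "cmod (l2inner x y) \<le> l2norm x * l2norm y"
proof -
  have "cmod (l2inner x y) \<le> (\<Sum>\<^sub>\<infinity>i. cmod (cnj (x i) * y i))"
    unfolding l2inner_def
    by (rule norm_infsum_bound) (use l2_norm_mult_summable[OF assms] in \<open>simp add: norm_mult\<close>)
  also have "\<dots> \<le> l2norm x * l2norm y"
    using l2_norm_mult_infsum_le[OF assms] by (simp add: norm_mult)
  finally show ?thesis .
qed

lemma l2norm_scale: "l2norm (\<lambda>i. c * x i) = cmod c * l2norm x"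
  by (simp add: l2norm_eq_sqrt l2sqnorm_def norm_mult power_mult_distrib
      infsum_cmult_right' real_sqrt_mult)

lemma l2norm_triangle:
  assumes "x \<in> l2" "y \<in> l2"
  shows "l2norm (\<lambda>i. x i + y i) \<le> l2norm x + l2norm y"
proof -
  have s: "(\<lambda>i. (cmod (x i))\<^sup>2) summable_on UNIV" "(\<lambda>i. (cmod (y i))\<^sup>2) summable_on UNIV"
    "(\<lambda>i. 2 * (cmod (x i) * cmod (y i))) summable_on UNIV"
    using assms summable_on_cmult_right[OF l2_norm_mult_summable[OF assms]] by (auto simp: l2_def)
  have "l2sqnorm (\<lambda>i. x i + y i)
      \<le> (\<Sum>\<^sub>\<infinity>i. (cmod (x i))\<^sup>2 + (cmod (y i))\<^sup>2 + 2 * (cmod (x i) * cmod (y i)))"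
    unfolding l2sqnorm_def
  proof (rule infsum_mono)
    show "(\<lambda>i. (cmod (x i + y i))\<^sup>2) summable_on UNIV"
      using l2_add[OF assms] by (simp add: l2_def)
    show "(\<lambda>i. (cmod (x i))\<^sup>2 + (cmod (y i))\<^sup>2 + 2 * (cmod (x i) * cmod (y i))) summable_on UNIV"
      using s by (intro summable_on_add)
    fix i
    have "(cmod (x i + y i))\<^sup>2 \<le> (cmod (x i) + cmod (y i))\<^sup>2"
      by (simp add: power_mono norm_triangle_ineq)
    thus "(cmod (x i + y i))\<^sup>2 \<le> (cmod (x i))\<^sup>2 + (cmod (y i))\<^sup>2 + 2 * (cmod (x i) * cmod (y i))"
      by (simp add: power2_sum)
  qed
  also have "\<dots> = l2sqnorm x + l2sqnorm y + 2 * (\<Sum>\<^sub>\<infinity>i. cmod (x i) * cmod (y i))"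
    using s by (simp add: infsum_add summable_on_add l2sqnorm_def infsum_cmult_right')
  also have "\<dots> \<le> (l2norm x + l2norm y)\<^sup>2"
    using l2_norm_mult_infsum_le[OF assms] by (simp add: power2_sum l2norm_power2)
  finally show ?thesis
    using l2norm_nonneg[of x] l2norm_nonneg[of y]
    by (simp add: l2norm_eq_sqrt real_le_lsqrt)
qed

lemma l2inner_add_scaled_right:
  assumes "x \<in> l2" "y \<in> l2" "z \<in> l2"
  shows "l2inner x (\<lambda>i. y i + c * z i) = l2inner x y + c * l2inner x z"
proof -
  have "l2inner x (\<lambda>i. y i + c * z i) = (\<Sum>\<^sub>\<infinity>i. cnj (x i) * y i + c * (cnj (x i) * z i))"
    by (simp add: l2inner_def algebra_simps)
  also have "\<dots> = l2inner x y + c * l2inner x z"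
    using l2inner_summable[OF assms(1,2)] l2inner_summable[OF assms(1,3)]
    by (simp add: infsum_add summable_on_cmult_right infsum_cmult_right' l2inner_def)
  finally show ?thesis .
qed

lemma l2inner_cnj_commute: "l2inner y x = cnj (l2inner x y)"
  by (simp only: l2inner_def infsum_cnj[symmetric]) (simp add: mult.commute)

lemma l2inner_add_scaled_left:
  assumes "x \<in> l2" "y \<in> l2" "z \<in> l2"
  shows "l2inner (\<lambda>i. x i + c * z i) y = l2inner x y + cnj c * l2inner z y"
proof -
  have "cnj (l2inner (\<lambda>i. x i + c * z i) y) = cnj (l2inner x y + cnj c * l2inner z y)"
    using l2inner_add_scaled_right[OF assms(2,1,3), of c] by (simp add: l2inner_cnj_commute[of y])
  thus ?thesis by (simp only: complex_cnj_cancel_iff)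
qed

lemma l2inner_self: "x \<in> l2 \<Longrightarrow> l2inner x x = complex_of_real (l2sqnorm x)"
proof -
  assume "x \<in> l2"
  hence "((\<lambda>i. complex_of_real ((cmod (x i))\<^sup>2)) has_sum complex_of_real (l2sqnorm x)) UNIV"
    unfolding l2sqnorm_def l2_def by (intro has_sum_of_real) simp
  moreover have "(\<lambda>i. complex_of_real ((cmod (x i))\<^sup>2)) = (\<lambda>i. cnj (x i) * x i)"
    by (rule ext) (metis complex_norm_square mult.commute)
  ultimately show ?thesis by (simp add: l2inner_def infsumI)
qed

definition unit_vec :: "'i \<Rightarrow> 'i vec" where
  "unit_vec i = (\<lambda>j. if j = i then 1 else 0)"

lemma unit_vec_l2 [simp]: "unit_vec i \<in> l2"
  by (rule l2_finite_support[of "{i}"]) (auto simp: unit_vec_def)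

lemma l2inner_finite_support:
  assumes "finite F" "\<And>i. i \<notin> F \<Longrightarrow> w i = 0"
  shows "l2inner w z = (\<Sum>i\<in>F. cnj (w i) * z i)"
proof -
  have "l2inner w z = (\<Sum>\<^sub>\<infinity>i\<in>F. cnj (w i) * z i)"
    unfolding l2inner_def by (rule infsum_cong_neutral) (use assms in auto)
  thus ?thesis using assms by simp
qed

lemma l2inner_unit_vec: "l2inner (unit_vec i) y = y i"
  by (subst l2inner_finite_support[of "{i}"]) (auto simp: unit_vec_def)

section \<open>Bounded operators and their adjoints\<close>

lemma bop_l2: "bop T \<Longrightarrow> x \<in> l2 \<Longrightarrow> T x \<in> l2"
  by (simp add: bop_def)

lemma bop_add_scaled:
  "bop T \<Longrightarrow> x \<in> l2 \<Longrightarrow> y \<in> l2 \<Longrightarrow> T (\<lambda>i. x i + c * y i) = (\<lambda>i. T x i + c * T y i)"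
  by (simp add: bop_def)

lemma bop_outside_l2: "bop T \<Longrightarrow> x \<notin> l2 \<Longrightarrow> T x = (\<lambda>i. 0)"
  by (simp add: bop_def)

lemma bop_zero:
  assumes "bop T"
  shows "T (\<lambda>i. 0) = (\<lambda>i. 0)"
proof -
  have "T (\<lambda>i. 0 + 1 * 0) = (\<lambda>i. T (\<lambda>i. 0) i + 1 * T (\<lambda>i. 0) i)"
    by (rule bop_add_scaled[OF assms]) auto
  thus ?thesis by (simp add: fun_eq_iff)
qed

lemma bop_scale: "bop T \<Longrightarrow> x \<in> l2 \<Longrightarrow> T (\<lambda>i. c * x i) = (\<lambda>i. c * T x i)"
  using bop_add_scaled[of T "\<lambda>i. 0" x c] bop_zero[of T] by simp

lemma bop_add: "bop T \<Longrightarrow> x \<in> l2 \<Longrightarrow> y \<in> l2 \<Longrightarrow> T (\<lambda>i. x i + y i) = (\<lambda>i. T x i + T y i)"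
  using bop_add_scaled[of T x y 1] by simp

lemma bop_bound:
  assumes "bop T"
  obtains K where "K \<ge> 0" "\<And>x. x \<in> l2 \<Longrightarrow> l2norm (T x) \<le> K * l2norm x"
proof -
  from assms obtain K where K: "\<forall>x\<in>l2. l2norm (T x) \<le> K * l2norm x"
    unfolding bop_def by blast
  have "l2norm (T x) \<le> max K 0 * l2norm x" if "x \<in> l2" for x
  proof -
    have "K * l2norm x \<le> max K 0 * l2norm x" by (rule mult_right_mono) (simp_all add: l2norm_nonneg)
    thus ?thesis using K that by fastforce
  qed
  thus ?thesis using that[of "max K 0"] by auto
qed

lemma bopI:
  assumes "\<And>x. x \<in> l2 \<Longrightarrow> T x \<in> l2"
    and "\<And>x y c. x \<in> l2 \<Longrightarrow> y \<in> l2 \<Longrightarrow> T (\<lambda>i. x i + c * y i) = (\<lambda>i. T x i + c * T y i)"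
    and "\<And>x. x \<in> l2 \<Longrightarrow> l2norm (T x) \<le> K * l2norm x"
    and "\<And>x. x \<notin> l2 \<Longrightarrow> T x = (\<lambda>i. 0)"
  shows "bop T"
  unfolding bop_def using assms by blast

lemma l2inner_bop_finite_support:
  assumes T: "bop T" and y: "y \<in> l2" and F: "finite F"
  shows "(\<And>i. i \<notin> F \<Longrightarrow> w i = 0) \<Longrightarrow>
    l2inner (T w) y = (\<Sum>i\<in>F. cnj (w i) * l2inner (T (unit_vec i)) y)"
  using F
proof (induction F arbitrary: w rule: finite_induct)
  case empty
  hence "w = (\<lambda>i. 0)" by auto
  thus ?case using bop_zero[OF T] by (simp add: l2inner_def)
next
  case (insert j F)
  define w' where "w' = w(j := 0)"
  have w'_zero: "\<And>i. i \<notin> F \<Longrightarrow> w' i = 0" using insert by (auto simp: w'_def)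
  have w'_l2: "w' \<in> l2" by (rule l2_finite_support[OF insert(1) w'_zero])
  have "w = (\<lambda>i. w' i + w j * unit_vec j i)" by (auto simp: w'_def unit_vec_def)
  hence "T w = (\<lambda>i. T w' i + w j * T (unit_vec j) i)"
    by (metis bop_add_scaled[OF T w'_l2 unit_vec_l2])
  hence "l2inner (T w) y = l2inner (T w') y + cnj (w j) * l2inner (T (unit_vec j)) y"
    using bop_l2[OF T] w'_l2 y by (simp add: l2inner_add_scaled_left)
  also have "l2inner (T w') y = (\<Sum>i\<in>F. cnj (w' i) * l2inner (T (unit_vec i)) y)"
    using insert.IH w'_zero by blast
  also have "\<dots> = (\<Sum>i\<in>F. cnj (w i) * l2inner (T (unit_vec i)) y)"
    using insert(2) by (intro sum.cong) (auto simp: w'_def)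
  finally show ?case using insert(1,2) by (simp add: add.commute)
qed

lemma le_of_square_le_mult:
  fixes r c :: real
  assumes "0 \<le> r" "0 \<le> c" "r * r \<le> c * r"
  shows "r \<le> c"
  using assms by (cases "r = 0") (auto simp: mult_le_cancel_right)

text \<open>Since adj is a definite description, everything about it rests on the existence of an
  adjoint for every bounded operator; in coordinates it is (T^* y)_i = <T e_i, y>.\<close>

definition adj_explicit :: "'i op \<Rightarrow> 'i op" where
  "adj_explicit T y = (if y \<in> l2 then (\<lambda>i. l2inner (T (unit_vec i)) y) else (\<lambda>i. 0))"

lemma adj_explicit_l2:
  assumes T: "bop T" and y: "y \<in> l2"
  shows "adj_explicit T y \<in> l2"
proof -
  obtain K where K: "K \<ge> 0" "\<And>x. x \<in> l2 \<Longrightarrow> l2norm (T x) \<le> K * l2norm x"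
    using bop_bound[OF T] by blast
  define z where "z = (\<lambda>i. l2inner (T (unit_vec i)) y)"
  have "(\<Sum>i\<in>F. (cmod (z i))\<^sup>2) \<le> (K * l2norm y)\<^sup>2" if F: "finite F" for F
  proof -
    define w where "w = (\<lambda>i. if i \<in> F then z i else 0)"
    define s where "s = (\<Sum>i\<in>F. (cmod (z i))\<^sup>2)"
    have s: "s \<ge> 0" by (simp add: s_def sum_nonneg)
    have w: "w \<in> l2" by (rule l2_finite_support[OF F]) (auto simp: w_def)
    have "l2inner (T w) y = (\<Sum>i\<in>F. cnj (z i) * z i)"
      using l2inner_bop_finite_support[OF T y F, of w] by (auto simp: w_def z_def)
    also have "\<dots> = complex_of_real s"
      unfolding s_def of_real_sum by (intro sum.cong refl) (metis complex_norm_square mult.commute of_real_power)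
    finally have "s = cmod (l2inner (T w) y)" using s by simp
    also have "\<dots> \<le> l2norm (T w) * l2norm y"
      by (rule l2inner_Cauchy_Schwarz[OF bop_l2[OF T w] y])
    also have "\<dots> \<le> K * l2norm w * l2norm y"
      using K(2)[OF w] l2norm_nonneg[of y] by (simp add: mult_right_mono)
    also have "l2norm w = sqrt s"
      unfolding l2norm_eq_sqrt l2sqnorm_def s_def
      by (subst infsum_cong_neutral[where T=F]) (auto simp: w_def F)
    finally have "sqrt s * sqrt s \<le> (K * l2norm y) * sqrt s"
      using s by (simp add: mult_ac)
    hence "sqrt s \<le> K * l2norm y"
      by (rule le_of_square_le_mult[rotated 2]) (simp_all add: l2norm_nonneg K(1) s)
    hence "(sqrt s)\<^sup>2 \<le> (K * l2norm y)\<^sup>2" by (rule power_mono) (simp add: s)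
    thus ?thesis using s by (simp add: s_def)
  qed
  hence "(\<lambda>i. (cmod (z i))\<^sup>2) summable_on UNIV"
    by (intro nonneg_bdd_above_summable_on bdd_aboveI2[where M="(K * l2norm y)\<^sup>2"]) auto
  thus ?thesis using y by (simp add: adj_explicit_def z_def l2_def)
qed

lemma l2_finite_approximation:
  assumes x: "x \<in> l2" and e: "e > 0"
  obtains F where "finite F" "l2norm (\<lambda>i. if i \<in> F then 0 else x i) \<le> e"
proof -
  have sx: "(\<lambda>i. (cmod (x i))\<^sup>2) summable_on UNIV" using x by (simp add: l2_def)
  obtain F where F: "finite F" "dist (\<Sum>i\<in>F. (cmod (x i))\<^sup>2) (l2sqnorm x) \<le> e\<^sup>2"
    using infsum_finite_approximation[OF sx, of "e\<^sup>2"] e by (auto simp: l2sqnorm_def)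
  have "l2sqnorm x = (\<Sum>\<^sub>\<infinity>i\<in>-F. (cmod (x i))\<^sup>2) + (\<Sum>\<^sub>\<infinity>i\<in>F. (cmod (x i))\<^sup>2)"
    unfolding l2sqnorm_def
    by (subst infsum_Un_disjoint[symmetric]) (auto intro: summable_on_subset[OF sx])
  also have "(\<Sum>\<^sub>\<infinity>i\<in>-F. (cmod (x i))\<^sup>2) = l2sqnorm (\<lambda>i. if i \<in> F then 0 else x i)"
    unfolding l2sqnorm_def by (rule infsum_cong_neutral) auto
  finally have "l2sqnorm (\<lambda>i. if i \<in> F then 0 else x i) \<le> e\<^sup>2"
    using F by (simp add: dist_real_def)
  hence "l2norm (\<lambda>i. if i \<in> F then 0 else x i) \<le> e"
    unfolding l2norm_eq_sqrt by (rule real_le_lsqrt[OF less_imp_le[OF e]])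
  thus ?thesis using that F(1) by simp
qed

lemma adj_explicit_inner_finite_support:
  assumes T: "bop T" and y: "y \<in> l2" and F: "finite F" and w: "\<And>i. i \<notin> F \<Longrightarrow> w i = 0"
  shows "l2inner (T w) y = l2inner w (adj_explicit T y)"
  using l2inner_bop_finite_support[OF T y F w] l2inner_finite_support[OF F w]
  by (simp add: adj_explicit_def y)

lemma cmod_l2inner_diff_le:
  assumes T: "bop T" and K: "\<And>x. x \<in> l2 \<Longrightarrow> l2norm (T x) \<le> K * l2norm x"
    and r: "r \<in> l2" and y: "y \<in> l2" and z: "z \<in> l2"
  shows "cmod (l2inner (T r) y - l2inner r z) \<le> l2norm r * (K * l2norm y + l2norm z)"
proof -
  have "cmod (l2inner (T r) y - l2inner r z) \<le> cmod (l2inner (T r) y) + cmod (l2inner r z)"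
    by (rule norm_triangle_ineq4)
  also have "\<dots> \<le> l2norm (T r) * l2norm y + l2norm r * l2norm z"
    by (intro add_mono l2inner_Cauchy_Schwarz bop_l2[OF T] r y z)
  also have "\<dots> \<le> K * l2norm r * l2norm y + l2norm r * l2norm z"
    using mult_right_mono[OF K[OF r] l2norm_nonneg[of y]] by simp
  finally show ?thesis by (simp add: algebra_simps)
qed

lemma adj_explicit_inner:
  assumes T: "bop T" and x: "x \<in> l2" and y: "y \<in> l2"
  shows "l2inner (T x) y = l2inner x (adj_explicit T y)"
proof -
  obtain K where K: "K \<ge> 0" "\<And>x. x \<in> l2 \<Longrightarrow> l2norm (T x) \<le> K * l2norm x"
    using bop_bound[OF T] by blast
  define z where "z = adj_explicit T y"
  have z: "z \<in> l2" using adj_explicit_l2[OF T y] by (simp add: z_def)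
  define C where "C = K * l2norm y + l2norm z + 1"
  have C: "C > 0"
    using mult_nonneg_nonneg[OF K(1) l2norm_nonneg[of y]] l2norm_nonneg[of z] by (simp add: C_def)
  define D where "D = l2inner (T x) y - l2inner x z"
  have "cmod D \<le> e" if e: "e > 0" for e
  proof -
    obtain F where F: "finite F" "l2norm (\<lambda>i. if i \<in> F then 0 else x i) \<le> e / C"
      using l2_finite_approximation[OF x, of "e / C"] e C by auto
    define w where "w = (\<lambda>i. if i \<in> F then x i else 0)"
    define r where "r = (\<lambda>i. if i \<in> F then 0 else x i)"
    have w: "w \<in> l2" by (rule l2_finite_support[OF F(1)]) (auto simp: w_def)
    have "r = (\<lambda>i. x i - w i)" by (auto simp: r_def w_def)
    hence r: "r \<in> l2" using l2_diff[OF x w] by simp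
    have x_split: "x = (\<lambda>i. w i + 1 * r i)" by (auto simp: w_def r_def)
    have "l2inner (T w) y = l2inner w z"
      unfolding z_def by (rule adj_explicit_inner_finite_support[OF T y F(1)]) (simp add: w_def)
    moreover have "l2inner (T x) y = l2inner (T w) y + l2inner (T r) y"
      by (subst x_split, subst bop_add_scaled[OF T w r])
         (simp add: l2inner_add_scaled_left[of _ y _ 1, simplified] bop_l2[OF T] w r y)
    moreover have "l2inner x z = l2inner w z + l2inner r z"
      by (subst x_split) (simp add: l2inner_add_scaled_left[of _ z _ 1, simplified] w r z)
    ultimately have "D = l2inner (T r) y - l2inner r z" by (simp add: D_def)
    hence "cmod D \<le> l2norm r * (K * l2norm y + l2norm z)"
      using cmod_l2inner_diff_le[OF T K(2) r y z] by simp
    also have "\<dots> \<le> l2norm r * C"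
      using l2norm_nonneg[of r] by (simp add: C_def mult_left_mono)
    also have "\<dots> \<le> e"
      using F(2) C by (simp add: r_def pos_le_divide_eq)
    finally show ?thesis .
  qed
  hence "cmod D = 0" by (metis field_le_epsilon norm_ge_zero order_antisym add_0)
  thus ?thesis by (simp add: D_def z_def)
qed

lemma bop_adj_explicit:
  assumes T: "bop T"
  shows "bop (adj_explicit T)"
proof -
  obtain K where K: "K \<ge> 0" "\<And>x. x \<in> l2 \<Longrightarrow> l2norm (T x) \<le> K * l2norm x"
    using bop_bound[OF T] by blast
  have "l2norm (adj_explicit T y) \<le> K * l2norm y" if y: "y \<in> l2" for y
  proof -
    define z where "z = adj_explicit T y"
    have z: "z \<in> l2" using adj_explicit_l2[OF T y] by (simp add: z_def)
    have "l2norm z * l2norm z = l2sqnorm z"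
      by (simp add: l2norm_power2[symmetric] power2_eq_square)
    also have "\<dots> = cmod (l2inner z z)"
      using z by (simp add: l2inner_self l2sqnorm_nonneg)
    also have "\<dots> = cmod (l2inner (T z) y)"
      using adj_explicit_inner[OF T z y] by (simp add: z_def)
    also have "\<dots> \<le> l2norm (T z) * l2norm y"
      by (rule l2inner_Cauchy_Schwarz[OF bop_l2[OF T z] y])
    also have "\<dots> \<le> (K * l2norm y) * l2norm z"
      using mult_right_mono[OF K(2)[OF z] l2norm_nonneg[of y]] by (simp add: mult_ac)
    finally show ?thesis
      unfolding z_def[symmetric]
      by (rule le_of_square_le_mult[rotated 2]) (simp_all add: l2norm_nonneg K(1))
  qed
  thus ?thesis
    by (intro bopI adj_explicit_l2[OF T])
       (auto simp: adj_explicit_def l2inner_add_scaled_right bop_l2[OF T] l2_add_scaled)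
qed

lemma adjoint_unique:
  assumes "bop S1" "bop S2"
    and "\<And>x y. x \<in> l2 \<Longrightarrow> y \<in> l2 \<Longrightarrow> l2inner (T x) y = l2inner x (S1 y)"
    and "\<And>x y. x \<in> l2 \<Longrightarrow> y \<in> l2 \<Longrightarrow> l2inner (T x) y = l2inner x (S2 y)"
  shows "S1 = S2"
proof
  fix y
  show "S1 y = S2 y"
  proof (cases "y \<in> l2")
    case True
    show ?thesis
      using assms(3,4)[OF unit_vec_l2 True] by (simp add: fun_eq_iff l2inner_unit_vec)
  next
    case False
    thus ?thesis using assms(1,2) by (simp add: bop_outside_l2)
  qed
qed

lemma adj_eq_adj_explicit:
  assumes "bop T"
  shows "adj T = adj_explicit T"
  unfolding adj_def
proof (rule the_equality)
  show "bop (adj_explicit T) \<and> (\<forall>x\<in>l2. \<forall>y\<in>l2. l2inner (T x) y = l2inner x (adj_explicit T y))"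
    using bop_adj_explicit[OF assms] adj_explicit_inner[OF assms] by blast
  show "S = adj_explicit T" if "bop S \<and> (\<forall>x\<in>l2. \<forall>y\<in>l2. l2inner (T x) y = l2inner x (S y))" for S
    using that adjoint_unique[of S "adj_explicit T" T] bop_adj_explicit[OF assms]
      adj_explicit_inner[OF assms] by blast
qed

lemma bop_adj: "bop T \<Longrightarrow> bop (adj T)"
  by (simp add: adj_eq_adj_explicit bop_adj_explicit)

lemma adj_inner: "bop T \<Longrightarrow> x \<in> l2 \<Longrightarrow> y \<in> l2 \<Longrightarrow> l2inner (T x) y = l2inner x (adj T y)"
  by (simp add: adj_eq_adj_explicit adj_explicit_inner)

lemma adj_eqI:
  assumes "bop T" "bop S"
    and "\<And>x y. x \<in> l2 \<Longrightarrow> y \<in> l2 \<Longrightarrow> l2inner (T x) y = l2inner x (S y)"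
  shows "adj T = S"
  by (rule adjoint_unique[OF bop_adj[OF assms(1)] assms(2)]) (use adj_inner[OF assms(1)] assms(3) in auto)

lemma bop_Id_op: "bop Id_op"
  by (rule bopI[where K=1]) (auto simp: Id_op_def l2_add_scaled)

lemma comp_Id_op: "bop T \<Longrightarrow> T \<circ> Id_op = T"
  by (rule ext) (auto simp: Id_op_def bop_outside_l2 bop_zero)

lemma Id_op_comp:
  assumes "bop T"
  shows "Id_op \<circ> T = T"
proof
  fix x
  show "(Id_op \<circ> T) x = T x"
    by (cases "x \<in> l2") (simp_all add: assms bop_l2 bop_outside_l2 Id_op_def)
qed

lemma bop_comp:
  fixes T U :: "'i op"
  assumes T: "bop T" and U: "bop U"
  shows "bop (T \<circ> U)"
proof -
  obtain K1 where K1: "K1 \<ge> 0" "\<And>x. x \<in> l2 \<Longrightarrow> l2norm (T x) \<le> K1 * l2norm x"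
    using bop_bound[OF T] by blast
  obtain K2 where K2: "\<And>x. x \<in> l2 \<Longrightarrow> l2norm (U x) \<le> K2 * l2norm x"
    using bop_bound[OF U] by blast
  have "l2norm (T (U x)) \<le> K1 * K2 * l2norm x" if x: "x \<in> l2" for x :: "'i vec"
    using K1(2)[OF bop_l2[OF U x]] mult_left_mono[OF K2[OF x] K1(1)] by (simp add: mult_ac)
  thus ?thesis
    by (intro bopI[where K="K1 * K2"]) (simp_all add: T U bop_l2 bop_add_scaled bop_outside_l2 bop_zero)
qed

lemma bop_op_add:
  assumes T: "bop T" and U: "bop U"
  shows "bop (op_add T U)"
proof -
  obtain K1 where K1: "\<And>x. x \<in> l2 \<Longrightarrow> l2norm (T x) \<le> K1 * l2norm x"
    using bop_bound[OF T] by blast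
  obtain K2 where K2: "\<And>x. x \<in> l2 \<Longrightarrow> l2norm (U x) \<le> K2 * l2norm x"
    using bop_bound[OF U] by blast
  have "l2norm (op_add T U x) \<le> (K1 + K2) * l2norm x" if x: "x \<in> l2" for x
    using l2norm_triangle[OF bop_l2[OF T x] bop_l2[OF U x]] K1[OF x] K2[OF x]
    by (simp add: op_add_def distrib_right)
  thus ?thesis
    by (intro bopI[where K="K1 + K2"])
       (simp_all add: op_add_def T U bop_l2 l2_add bop_add_scaled bop_outside_l2 algebra_simps)
qed

lemma bop_op_scale:
  assumes T: "bop T"
  shows "bop (op_scale c T)"
proof -
  obtain K where K: "\<And>x. x \<in> l2 \<Longrightarrow> l2norm (T x) \<le> K * l2norm x"
    using bop_bound[OF T] by blast
  have "l2norm (op_scale c T x) \<le> cmod c * K * l2norm x" if x: "x \<in> l2" for x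
    using mult_left_mono[OF K[OF x], of "cmod c"] by (simp add: op_scale_def l2norm_scale mult_ac)
  thus ?thesis
    by (intro bopI[where K="cmod c * K"])
       (simp_all add: op_scale_def T bop_l2 l2_scale bop_add_scaled bop_outside_l2 algebra_simps)
qed

lemma op_diff_eq: "op_diff T U = op_add T (op_scale (-1) U)"
  by (simp add: op_diff_def op_add_def op_scale_def)

lemma bop_op_diff: "bop T \<Longrightarrow> bop U \<Longrightarrow> bop (op_diff T U)"
  by (simp add: op_diff_eq bop_op_add bop_op_scale)

lemma adj_adj:
  assumes "bop T"
  shows "adj (adj T) = T"
proof (rule adj_eqI[OF bop_adj[OF assms] assms])
  fix x y :: "'a vec" assume "x \<in> l2" "y \<in> l2"
  thus "l2inner (adj T x) y = l2inner x (T y)"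
    using adj_inner[OF assms, of y x] by (simp add: l2inner_cnj_commute[of _ "T y"] l2inner_cnj_commute[of y])
qed

lemma adj_comp:
  assumes T: "bop T" and U: "bop U"
  shows "adj (T \<circ> U) = adj U \<circ> adj T"
  by (rule adj_eqI[OF bop_comp[OF T U] bop_comp[OF bop_adj[OF U] bop_adj[OF T]]])
     (simp add: adj_inner[OF T] adj_inner[OF U] bop_l2[OF U] bop_l2[OF bop_adj[OF T]])

lemma adj_Id_op: "adj Id_op = Id_op"
  by (rule adj_eqI[OF bop_Id_op bop_Id_op]) (simp add: Id_op_def)

lemma comp_op_add_left: "op_add T U \<circ> X = op_add (T \<circ> X) (U \<circ> X)"
  by (simp add: op_add_def fun_eq_iff)

lemma comp_op_scale_left: "op_scale c T \<circ> X = op_scale c (T \<circ> X)"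
  by (simp add: op_scale_def fun_eq_iff)

lemma comp_op_diff_left: "op_diff T U \<circ> X = op_diff (T \<circ> X) (U \<circ> X)"
  by (simp add: op_diff_def fun_eq_iff)

lemma comp_op_add_right:
  assumes "bop L" "bop T" "bop U"
  shows "L \<circ> op_add T U = op_add (L \<circ> T) (L \<circ> U)"
proof
  fix x
  show "(L \<circ> op_add T U) x = op_add (L \<circ> T) (L \<circ> U) x"
    by (cases "x \<in> l2") (simp_all add: assms op_add_def bop_add bop_l2 bop_outside_l2 bop_zero)
qed

lemma comp_op_scale_right:
  assumes "bop L" "bop T"
  shows "L \<circ> op_scale c T = op_scale c (L \<circ> T)"
proof
  fix x
  show "(L \<circ> op_scale c T) x = op_scale c (L \<circ> T) x"
    by (cases "x \<in> l2") (simp_all add: assms op_scale_def bop_scale bop_l2 bop_outside_l2 bop_zero)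
qed

lemma comp_op_diff_right:
  "bop L \<Longrightarrow> bop T \<Longrightarrow> bop U \<Longrightarrow> L \<circ> op_diff T U = op_diff (L \<circ> T) (L \<circ> U)"
  by (simp add: op_diff_eq comp_op_add_right comp_op_scale_right bop_op_scale)

lemma opnorm_bdd_above:
  assumes "bop T"
  shows "bdd_above {l2norm (T x) | x. x \<in> l2 \<and> l2norm x \<le> 1}"
proof -
  obtain K where K: "K \<ge> 0" "\<And>x. x \<in> l2 \<Longrightarrow> l2norm (T x) \<le> K * l2norm x"
    using bop_bound[OF assms] by blast
  show ?thesis
  proof (rule bdd_aboveI)
    fix r assume "r \<in> {l2norm (T x) | x. x \<in> l2 \<and> l2norm x \<le> 1}"
    then obtain x where "x \<in> l2" "l2norm x \<le> 1" "r = l2norm (T x)" by blast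
    thus "r \<le> K" using K(2)[of x] mult_left_le[of "l2norm x" K] K(1) by auto
  qed
qed

lemma opnorm_upper: "bop T \<Longrightarrow> x \<in> l2 \<Longrightarrow> l2norm x \<le> 1 \<Longrightarrow> l2norm (T x) \<le> opnorm T"
  unfolding opnorm_def by (rule cSup_upper) (use opnorm_bdd_above in auto)

lemma opnorm_nonneg:
  assumes "bop T"
  shows "0 \<le> opnorm T"
proof -
  have "l2norm (T (\<lambda>i. 0)) \<le> opnorm T"
    by (rule opnorm_upper[OF assms]) (simp_all add: l2norm_def)
  thus ?thesis using l2norm_nonneg[of "T (\<lambda>i. 0)"] by linarith
qed

lemma opnorm_bound:
  assumes T: "bop T" and x: "x \<in> l2"
  shows "l2norm (T x) \<le> opnorm T * l2norm x"
proof (cases "l2norm x = 0")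
  case True
  thus ?thesis using l2norm_eq_0D[OF x] bop_zero[OF T] by simp
next
  case False
  hence n: "l2norm x > 0" using l2norm_nonneg[of x] by simp
  define c where "c = complex_of_real (1 / l2norm x)"
  have "l2norm (T (\<lambda>i. c * x i)) \<le> opnorm T"
    using n by (intro opnorm_upper[OF T] l2_scale[OF x]) (simp only: l2norm_scale c_def norm_of_real, simp)
  moreover have "l2norm (T (\<lambda>i. c * x i)) = l2norm (T x) / l2norm x"
    using n by (simp only: bop_scale[OF T x] l2norm_scale c_def norm_of_real) simp
  ultimately show ?thesis using n by (simp add: field_simps)
qed

lemma opnorm_le:
  assumes T: "bop T" and C: "C \<ge> 0" and bound: "\<And>x. x \<in> l2 \<Longrightarrow> l2norm (T x) \<le> C * l2norm x"
  shows "opnorm T \<le> C"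
  unfolding opnorm_def
proof (rule cSup_least)
  show "{l2norm (T x) | x. x \<in> l2 \<and> l2norm x \<le> 1} \<noteq> {}"
    by (auto simp: l2norm_def intro!: exI[of _ "\<lambda>i. 0"])
  fix r assume "r \<in> {l2norm (T x) | x. x \<in> l2 \<and> l2norm x \<le> 1}"
  then obtain x where "x \<in> l2" "l2norm x \<le> 1" "r = l2norm (T x)" by blast
  thus "r \<le> C" using bound[of x] mult_left_le[of "l2norm x" C] C by auto
qed

lemma opnorm_comp:
  fixes T U :: "'i op"
  assumes T: "bop T" and U: "bop U"
  shows "opnorm (T \<circ> U) \<le> opnorm T * opnorm U"
proof (rule opnorm_le[OF bop_comp[OF T U]])
  show "0 \<le> opnorm T * opnorm U" using opnorm_nonneg[OF T] opnorm_nonneg[OF U] by simp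
  fix x :: "'i vec" assume x: "x \<in> l2"
  have "l2norm (T (U x)) \<le> opnorm T * l2norm (U x)" by (rule opnorm_bound[OF T bop_l2[OF U x]])
  also have "\<dots> \<le> opnorm T * (opnorm U * l2norm x)"
    by (rule mult_left_mono[OF opnorm_bound[OF U x] opnorm_nonneg[OF T]])
  finally show "l2norm ((T \<circ> U) x) \<le> opnorm T * opnorm U * l2norm x" by (simp add: mult_ac)
qed

lemma opnorm_op_add:
  fixes T U :: "'i op"
  assumes T: "bop T" and U: "bop U"
  shows "opnorm (op_add T U) \<le> opnorm T + opnorm U"
proof (rule opnorm_le[OF bop_op_add[OF T U]])
  show "0 \<le> opnorm T + opnorm U" using opnorm_nonneg[OF T] opnorm_nonneg[OF U] by simp
  fix x :: "'i vec" assume x: "x \<in> l2"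
  show "l2norm (op_add T U x) \<le> (opnorm T + opnorm U) * l2norm x"
    using l2norm_triangle[OF bop_l2[OF T x] bop_l2[OF U x]] opnorm_bound[OF T x] opnorm_bound[OF U x]
    by (simp add: op_add_def distrib_right)
qed

lemma opnorm_op_scale:
  fixes T :: "'i op"
  assumes T: "bop T"
  shows "opnorm (op_scale c T) \<le> cmod c * opnorm T"
proof (rule opnorm_le[OF bop_op_scale[OF T]])
  show "0 \<le> cmod c * opnorm T" using opnorm_nonneg[OF T] by simp
  fix x :: "'i vec" assume x: "x \<in> l2"
  show "l2norm (op_scale c T x) \<le> cmod c * opnorm T * l2norm x"
    using mult_left_mono[OF opnorm_bound[OF T x], of "cmod c"]
    by (simp add: op_scale_def l2norm_scale mult_ac)
qed

lemma opnorm_op_diff: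
  "bop T \<Longrightarrow> bop U \<Longrightarrow> opnorm (op_diff T U) \<le> opnorm T + opnorm U"
  using opnorm_op_add[of T "op_scale (-1) U"] opnorm_op_scale[of U "-1"]
  by (simp add: op_diff_eq bop_op_scale)

lemma opnorm_le_0D:
  assumes T: "bop T" and "opnorm T \<le> 0"
  shows "T = (\<lambda>x i. 0)"
proof
  fix x
  show "T x = (\<lambda>i. 0)"
  proof (cases "x \<in> l2")
    case True
    have "l2norm (T x) \<le> 0"
      using opnorm_bound[OF T True] mult_right_mono[OF assms(2) l2norm_nonneg[of x]] by simp
    thus ?thesis using l2norm_eq_0D[OF bop_l2[OF T True]] l2norm_nonneg[of "T x"] by simp
  next
    case False
    thus ?thesis using T by (simp add: bop_outside_l2)
  qed
qed

definition sandwich :: "'i op \<Rightarrow> 'i op \<Rightarrow> 'i op" where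
  "sandwich L T = L \<circ> (T \<circ> adj L)"

lemma bop_sandwich: "bop L \<Longrightarrow> bop T \<Longrightarrow> bop (sandwich L T)"
  by (simp add: sandwich_def bop_comp bop_adj)

lemma sandwich_Id_op: "bop L \<Longrightarrow> sandwich L Id_op = L \<circ> adj L"
  by (simp add: sandwich_def Id_op_comp bop_adj)

lemma sandwich_op_add:
  "bop L \<Longrightarrow> bop T \<Longrightarrow> bop U \<Longrightarrow> sandwich L (op_add T U) = op_add (sandwich L T) (sandwich L U)"
  by (simp add: sandwich_def comp_op_add_left comp_op_add_right bop_comp bop_adj)

lemma sandwich_op_scale:
  "bop L \<Longrightarrow> bop T \<Longrightarrow> sandwich L (op_scale c T) = op_scale c (sandwich L T)"
  by (simp add: sandwich_def comp_op_scale_left comp_op_scale_right bop_comp bop_adj)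

lemma sandwich_op_diff:
  "bop L \<Longrightarrow> bop T \<Longrightarrow> bop U \<Longrightarrow> sandwich L (op_diff T U) = op_diff (sandwich L T) (sandwich L U)"
  by (simp add: sandwich_def comp_op_diff_left comp_op_diff_right bop_comp bop_adj)

lemma adj_sandwich: "bop L \<Longrightarrow> bop T \<Longrightarrow> adj (sandwich L T) = sandwich L (adj T)"
  by (simp add: sandwich_def adj_comp bop_comp bop_adj adj_adj comp_assoc)

lemma sandwich_comp:
  assumes "bop L" "bop T" "bop U" "adj L \<circ> (L \<circ> (U \<circ> adj L)) = U \<circ> adj L"
  shows "sandwich L (T \<circ> U) = sandwich L T \<circ> sandwich L U"
  using assms(4) by (simp add: sandwich_def comp_assoc)

lemma opnorm_sandwich:
  assumes L: "bop L" and T: "bop T"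
  shows "opnorm (sandwich L T) \<le> opnorm L * opnorm (adj L) * opnorm T"
proof -
  have "opnorm (sandwich L T) \<le> opnorm L * opnorm (T \<circ> adj L)"
    unfolding sandwich_def by (rule opnorm_comp[OF L bop_comp[OF T bop_adj[OF L]]])
  also have "\<dots> \<le> opnorm L * (opnorm T * opnorm (adj L))"
    by (rule mult_left_mono[OF opnorm_comp[OF T bop_adj[OF L]] opnorm_nonneg[OF L]])
  finally show ?thesis by (simp add: mult_ac)
qed

section \<open>The generated C*-algebra and its characters\<close>

definition cstar_closed :: "'i op set \<Rightarrow> 'i op set \<Rightarrow> bool" where
  "cstar_closed S B \<longleftrightarrow> S \<subseteq> B \<and> Id_op \<in> B \<and> B \<subseteq> Collect bop
      \<and> (\<forall>T\<in>B. \<forall>U\<in>B. op_add T U \<in> B \<and> T \<circ> U \<in> B)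
      \<and> (\<forall>c. \<forall>T\<in>B. op_scale c T \<in> B)
      \<and> (\<forall>T\<in>B. adj T \<in> B)
      \<and> (\<forall>f T. (\<forall>n. f n \<in> B) \<and> bop T \<and> (\<lambda>n. opnorm (op_diff (f n) T)) \<longlonglongrightarrow> 0
               \<longrightarrow> T \<in> B)"

lemma cstar_gen_eq_Inter: "cstar_gen S = \<Inter> {B. cstar_closed S B}"
  by (simp add: cstar_gen_def cstar_closed_def)

lemma cstar_gen_least: "cstar_closed S B \<Longrightarrow> cstar_gen S \<subseteq> B"
  unfolding cstar_gen_eq_Inter by blast

lemma cstar_closedI:
  assumes "S \<subseteq> B" "Id_op \<in> B" "\<And>T. T \<in> B \<Longrightarrow> bop T"
    "\<And>T U. T \<in> B \<Longrightarrow> U \<in> B \<Longrightarrow> op_add T U \<in> B"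
    "\<And>T U. T \<in> B \<Longrightarrow> U \<in> B \<Longrightarrow> T \<circ> U \<in> B"
    "\<And>c T. T \<in> B \<Longrightarrow> op_scale c T \<in> B"
    "\<And>T. T \<in> B \<Longrightarrow> adj T \<in> B"
    "\<And>f T. (\<And>n. f n \<in> B) \<Longrightarrow> bop T \<Longrightarrow> (\<lambda>n. opnorm (op_diff (f n) T)) \<longlonglongrightarrow> 0 \<Longrightarrow> T \<in> B"
  shows "cstar_closed S B"
proof -
  have "B \<subseteq> Collect bop" using assms(3) by blast
  moreover have "\<forall>T\<in>B. \<forall>U\<in>B. op_add T U \<in> B \<and> T \<circ> U \<in> B" using assms(4,5) by blast
  moreover have "\<forall>c. \<forall>T\<in>B. op_scale c T \<in> B" using assms(6) by blast
  moreover have "\<forall>T\<in>B. adj T \<in> B" using assms(7) by blast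
  moreover have "\<forall>f T. (\<forall>n. f n \<in> B) \<and> bop T \<and> (\<lambda>n. opnorm (op_diff (f n) T)) \<longlonglongrightarrow> 0 \<longrightarrow> T \<in> B"
    using assms(8) by blast
  ultimately show ?thesis unfolding cstar_closed_def using assms(1,2) by (intro conjI)
qed

lemma
  assumes "cstar_closed S B"
  shows cstar_closed_generators: "S \<subseteq> B"
    and cstar_closed_Id_op: "Id_op \<in> B"
    and cstar_closed_bop: "T \<in> B \<Longrightarrow> bop T"
    and cstar_closed_op_add: "T \<in> B \<Longrightarrow> U \<in> B \<Longrightarrow> op_add T U \<in> B"
    and cstar_closed_comp: "T \<in> B \<Longrightarrow> U \<in> B \<Longrightarrow> T \<circ> U \<in> B"
    and cstar_closed_op_scale: "T \<in> B \<Longrightarrow> op_scale c T \<in> B"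
    and cstar_closed_adj: "T \<in> B \<Longrightarrow> adj T \<in> B"
    and cstar_closed_limit:
      "(\<And>n. f n \<in> B) \<Longrightarrow> bop T \<Longrightarrow> (\<lambda>n. opnorm (op_diff (f n) T)) \<longlonglongrightarrow> 0 \<Longrightarrow> T \<in> B"
proof -
  note parts = assms[unfolded cstar_closed_def]
  show "S \<subseteq> B" using parts by blast
  show "Id_op \<in> B" using parts by blast
  show "T \<in> B \<Longrightarrow> bop T" using parts by blast
  show "T \<in> B \<Longrightarrow> U \<in> B \<Longrightarrow> op_add T U \<in> B" using parts by blast
  show "T \<in> B \<Longrightarrow> U \<in> B \<Longrightarrow> T \<circ> U \<in> B" using parts by blast
  show "T \<in> B \<Longrightarrow> op_scale c T \<in> B" using parts by blast
  show "T \<in> B \<Longrightarrow> adj T \<in> B" using parts by blast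
  show "(\<And>n. f n \<in> B) \<Longrightarrow> bop T \<Longrightarrow> (\<lambda>n. opnorm (op_diff (f n) T)) \<longlonglongrightarrow> 0 \<Longrightarrow> T \<in> B"
    using parts by blast
qed

lemma cstar_closed_cstar_gen:
  assumes S: "S \<subseteq> Collect bop"
  shows "cstar_closed S (cstar_gen S)"
proof (rule cstar_closedI)
  have "cstar_closed S (Collect bop)"
    using S by (intro cstar_closedI) (simp_all add: bop_Id_op bop_op_add bop_comp bop_op_scale bop_adj)
  thus "\<And>T. T \<in> cstar_gen S \<Longrightarrow> bop T" using cstar_gen_least by blast
  show "S \<subseteq> cstar_gen S"
    unfolding cstar_gen_eq_Inter using cstar_closed_generators by blast
  show "Id_op \<in> cstar_gen S"
    unfolding cstar_gen_eq_Inter using cstar_closed_Id_op by blast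
  show "\<And>T U. T \<in> cstar_gen S \<Longrightarrow> U \<in> cstar_gen S \<Longrightarrow> op_add T U \<in> cstar_gen S"
    unfolding cstar_gen_eq_Inter using cstar_closed_op_add by blast
  show "\<And>T U. T \<in> cstar_gen S \<Longrightarrow> U \<in> cstar_gen S \<Longrightarrow> T \<circ> U \<in> cstar_gen S"
    unfolding cstar_gen_eq_Inter using cstar_closed_comp by blast
  show "\<And>c T. T \<in> cstar_gen S \<Longrightarrow> op_scale c T \<in> cstar_gen S"
    unfolding cstar_gen_eq_Inter using cstar_closed_op_scale by blast
  show "\<And>T. T \<in> cstar_gen S \<Longrightarrow> adj T \<in> cstar_gen S"
    unfolding cstar_gen_eq_Inter using cstar_closed_adj by blast
  show "T \<in> cstar_gen S"
    if "\<And>n. f n \<in> cstar_gen S" "bop T" "(\<lambda>n. opnorm (op_diff (f n) T)) \<longlonglongrightarrow> 0" for f T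
  proof (unfold cstar_gen_eq_Inter, rule InterI)
    fix B assume "B \<in> {B. cstar_closed S B}"
    hence B: "cstar_closed S B" by simp
    thus "T \<in> B" using cstar_closed_limit[OF B _ that(2,3)] that(1) cstar_gen_least[OF B] by blast
  qed
qed

lemma opnorm_sandwich_diff_tendsto:
  assumes L: "bop L" and f: "\<And>n. bop (f n)" and T: "bop T"
    and lim: "(\<lambda>n. opnorm (op_diff (f n) T)) \<longlonglongrightarrow> 0"
  shows "(\<lambda>n. opnorm (op_diff (sandwich L (f n)) (sandwich L T))) \<longlonglongrightarrow> 0"
proof (rule Lim_null_comparison)
  show "\<forall>\<^sub>F n in sequentially. norm (opnorm (op_diff (sandwich L (f n)) (sandwich L T)))
      \<le> opnorm L * opnorm (adj L) * opnorm (op_diff (f n) T)"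
    using opnorm_sandwich[OF L bop_op_diff[OF f T]]
      opnorm_nonneg[OF bop_op_diff[OF bop_sandwich[OF L f] bop_sandwich[OF L T]]]
    by (simp add: sandwich_op_diff L f T)
  show "(\<lambda>n. opnorm L * opnorm (adj L) * opnorm (op_diff (f n) T)) \<longlonglongrightarrow> 0"
    using tendsto_mult_right_zero[OF lim] by simp
qed

text \<open>The operators that the sandwich map sends into the algebra again form a norm-closed unital
  *-algebra containing the generators.\<close>

lemma sandwich_mem_cstar_gen:
  assumes S: "S \<subseteq> Collect bop" and L: "bop L"
    and Id: "L \<circ> adj L \<in> cstar_gen S"
    and gen: "\<And>T. T \<in> S \<Longrightarrow> sandwich L T \<in> cstar_gen S"
    and cancel: "\<And>U. U \<in> cstar_gen S \<Longrightarrow> adj L \<circ> (L \<circ> (U \<circ> adj L)) = U \<circ> adj L"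
    and T: "T \<in> cstar_gen S"
  shows "sandwich L T \<in> cstar_gen S"
proof -
  define A where "A = cstar_gen S"
  have A: "cstar_closed S A" unfolding A_def by (rule cstar_closed_cstar_gen[OF S])
  note A_bop = cstar_closed_bop[OF A]
  define B where "B = {T \<in> A. sandwich L T \<in> A}"
  have "cstar_closed S B"
  proof (rule cstar_closedI)
    show "S \<subseteq> B" using cstar_closed_generators[OF A] gen by (auto simp: B_def A_def)
    show "Id_op \<in> B" using cstar_closed_Id_op[OF A] Id L by (simp add: B_def A_def sandwich_Id_op)
    show "\<And>T. T \<in> B \<Longrightarrow> bop T" using A_bop by (simp add: B_def)
    show "\<And>T U. T \<in> B \<Longrightarrow> U \<in> B \<Longrightarrow> op_add T U \<in> B"
      using cstar_closed_op_add[OF A] by (simp add: B_def sandwich_op_add L A_bop)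
    show "\<And>T U. T \<in> B \<Longrightarrow> U \<in> B \<Longrightarrow> T \<circ> U \<in> B"
      using cstar_closed_comp[OF A] cancel by (simp add: B_def A_def sandwich_comp L cstar_closed_bop[OF A[unfolded A_def]])
    show "\<And>c T. T \<in> B \<Longrightarrow> op_scale c T \<in> B"
      using cstar_closed_op_scale[OF A] by (simp add: B_def sandwich_op_scale L A_bop)
    show "\<And>T. T \<in> B \<Longrightarrow> adj T \<in> B"
      using cstar_closed_adj[OF A] by (simp add: B_def adj_sandwich[symmetric] L A_bop)
    fix f T assume f: "\<And>n. f n \<in> B" and T: "bop T" and lim: "(\<lambda>n. opnorm (op_diff (f n) T)) \<longlonglongrightarrow> 0"
    have f_bop: "\<And>n. bop (f n)" using f A_bop by (simp add: B_def)
    have lim_sandwich: "(\<lambda>n. opnorm (op_diff (sandwich L (f n)) (sandwich L T))) \<longlonglongrightarrow> 0"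
      by (rule opnorm_sandwich_diff_tendsto[OF L f_bop T lim])
    have "T \<in> A"
      using f by (intro cstar_closed_limit[OF A _ T lim]) (simp add: B_def)
    moreover have "sandwich L T \<in> A"
      using f by (intro cstar_closed_limit[OF A _ bop_sandwich[OF L T] lim_sandwich]) (simp add: B_def)
    ultimately show "T \<in> B" by (simp add: B_def)
  qed
  hence "A \<subseteq> B" unfolding A_def by (rule cstar_gen_least)
  thus ?thesis using T by (auto simp: A_def B_def)
qed

lemma characters_comp:
  assumes chr: "chr \<in> characters B"
    and maps: "\<And>T. T \<in> B \<Longrightarrow> \<Psi> T \<in> B"
    and add: "\<And>T U. T \<in> B \<Longrightarrow> U \<in> B \<Longrightarrow> \<Psi> (op_add T U) = op_add (\<Psi> T) (\<Psi> U)"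
    and mult: "\<And>T U. T \<in> B \<Longrightarrow> U \<in> B \<Longrightarrow> \<Psi> (T \<circ> U) = \<Psi> T \<circ> \<Psi> U"
    and scale: "\<And>c T. T \<in> B \<Longrightarrow> \<Psi> (op_scale c T) = op_scale c (\<Psi> T)"
    and nonzero: "N \<in> B" "chr (\<Psi> N) \<noteq> 0"
  shows "(\<lambda>T. chr (\<Psi> T)) \<in> characters B"
  using assms unfolding characters_def by auto

lemma opnorm_commutator_le:
  assumes X: "bop X" and F: "bop F" and T: "bop T" and comm: "F \<circ> X = X \<circ> F"
  shows "opnorm (op_diff (T \<circ> X) (X \<circ> T)) \<le> 2 * opnorm X * opnorm (op_diff F T)"
proof -
  define D where "D = op_diff F T"
  have D: "bop D" by (simp add: D_def bop_op_diff F T)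
  have "op_diff (T \<circ> X) (X \<circ> T) = op_diff (X \<circ> D) (D \<circ> X)"
    by (simp add: D_def comp_op_diff_right comp_op_diff_left F T X comm)
       (simp add: op_diff_def fun_eq_iff)
  hence "opnorm (op_diff (T \<circ> X) (X \<circ> T)) \<le> opnorm (X \<circ> D) + opnorm (D \<circ> X)"
    by (simp add: opnorm_op_diff bop_comp D X)
  also have "\<dots> \<le> opnorm X * opnorm D + opnorm D * opnorm X"
    by (intro add_mono opnorm_comp D X)
  finally show ?thesis by (simp add: D_def)
qed

lemma cstar_gen_commute:
  assumes S: "S \<subseteq> Collect bop" and X: "bop X" "adj X = X"
    and comm: "\<And>T. T \<in> S \<Longrightarrow> T \<circ> X = X \<circ> T"
    and T: "T \<in> cstar_gen S"
  shows "T \<circ> X = X \<circ> T"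
proof -
  define C where "C = {T. bop T \<and> T \<circ> X = X \<circ> T}"
  have "cstar_closed S C"
  proof (rule cstar_closedI)
    show "S \<subseteq> C" using S comm by (auto simp: C_def)
    show "Id_op \<in> C" by (simp add: C_def bop_Id_op comp_Id_op Id_op_comp X)
    show "\<And>T. T \<in> C \<Longrightarrow> bop T" by (simp add: C_def)
    show "\<And>T U. T \<in> C \<Longrightarrow> U \<in> C \<Longrightarrow> op_add T U \<in> C"
      by (simp add: C_def bop_op_add comp_op_add_left comp_op_add_right X)
    show "\<And>T U. T \<in> C \<Longrightarrow> U \<in> C \<Longrightarrow> T \<circ> U \<in> C"
      by (simp add: C_def bop_comp comp_assoc) (metis comp_assoc)
    show "\<And>c T. T \<in> C \<Longrightarrow> op_scale c T \<in> C"
      by (simp add: C_def bop_op_scale comp_op_scale_left comp_op_scale_right X)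
    show "\<And>T. T \<in> C \<Longrightarrow> adj T \<in> C"
      by (simp add: C_def bop_adj) (metis X adj_comp)
    fix f T assume f: "\<And>n. f n \<in> C" and T: "bop T"
      and lim: "(\<lambda>n. opnorm (op_diff (f n) T)) \<longlonglongrightarrow> 0"
    have f_bop: "\<And>n. bop (f n)" and f_comm: "\<And>n. f n \<circ> X = X \<circ> f n"
      using f by (auto simp: C_def)
    define K where "K = op_diff (T \<circ> X) (X \<circ> T)"
    have K: "bop K" by (simp add: K_def bop_op_diff bop_comp T X)
    have "opnorm K \<le> 2 * opnorm X * opnorm (op_diff (f n) T)" for n
      unfolding K_def by (rule opnorm_commutator_le[OF X(1) f_bop T f_comm])
    moreover have "(\<lambda>n. 2 * opnorm X * opnorm (op_diff (f n) T)) \<longlonglongrightarrow> 0"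
      using tendsto_mult_right_zero[OF lim] by simp
    ultimately have "opnorm K \<le> 0" by (intro LIMSEQ_le_const) auto
    hence "K = (\<lambda>x i. 0)" by (rule opnorm_le_0D[OF K])
    hence "T \<circ> X = X \<circ> T" by (simp add: K_def op_diff_def fun_eq_iff)
    thus "T \<in> C" by (simp add: C_def T)
  qed
  thus ?thesis using cstar_gen_least T by (auto simp: C_def)
qed

section \<open>Isometric representations with commuting range projections\<close>

locale commuting_isometric_rep =
  fixes gm :: "'g \<Rightarrow> 'g \<Rightarrow> 'g" and e :: 'g and ginv :: "'g \<Rightarrow> 'g"
    and P :: "'g set" and V :: "'g \<Rightarrow> 'i op"
  assumes grp: "group gm e ginv"
    and P_semigroup: "\<forall>a\<in>P. \<forall>b\<in>P. gm a b \<in> P"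
    and e_in_P: "e \<in> P"
    and P_generates: "{gm a (ginv b) | a b. a \<in> P \<and> b \<in> P} = UNIV"
    and V_isom: "\<forall>a\<in>P. isometry (V a)"
    and V_mult: "\<forall>a\<in>P. \<forall>b\<in>P. V a \<circ> V b = V (gm b a)"
    and V_commuting: "\<forall>a\<in>P. \<forall>b\<in>P.
           (V a \<circ> adj (V a)) \<circ> (V b \<circ> adj (V b)) = (V b \<circ> adj (V b)) \<circ> (V a \<circ> adj (V a))"
begin

sublocale G: group gm e ginv by (rule grp)

abbreviation "W \<equiv> Wop gm ginv P V"
abbreviation "E \<equiv> Eop gm ginv P V"
abbreviation "\<A> \<equiv> Aalg gm ginv P V"
abbreviation "\<Omega> \<equiv> Omega gm ginv P V"

lemma inv_mult_cancel [simp]: "gm (ginv x) (gm x y) = y"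
  by (simp add: G.assoc[symmetric])

lemma mult_inv_cancel [simp]: "gm x (gm (ginv x) y) = y"
  by (simp add: G.assoc[symmetric])

lemma P_mult: "a \<in> P \<Longrightarrow> b \<in> P \<Longrightarrow> gm a b \<in> P"
  using P_semigroup by blast

lemma obtain_P_quotient:
  obtains a b where "a \<in> P" "b \<in> P" "g = gm a (ginv b)"
  using P_generates by blast

lemma P_Ore:
  assumes "a \<in> P" "b \<in> P"
  obtains p q where "p \<in> P" "q \<in> P" "gm a p = gm b q"
proof -
  obtain p q where pq: "p \<in> P" "q \<in> P" "gm (ginv a) b = gm p (ginv q)"
    using obtain_P_quotient by blast
  have "gm b q = gm a (gm (gm (ginv a) b) q)" by (simp add: G.assoc)
  also have "\<dots> = gm a p" using pq(3) by (simp add: G.assoc)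
  finally show ?thesis using that pq(1,2) by metis
qed

lemma bop_V: "a \<in> P \<Longrightarrow> bop (V a)"
  using V_isom by (simp add: isometry_def)

lemma bop_adj_V: "a \<in> P \<Longrightarrow> bop (adj (V a))"
  by (simp add: bop_V bop_adj)

lemma adj_V_comp_V: "a \<in> P \<Longrightarrow> adj (V a) \<circ> V a = Id_op"
  using V_isom by (simp add: isometry_def)

lemma adj_V_comp_V_comp: "a \<in> P \<Longrightarrow> bop X \<Longrightarrow> adj (V a) \<circ> (V a \<circ> X) = X"
  by (simp add: comp_assoc[symmetric] adj_V_comp_V Id_op_comp)

lemma V_comp_V: "a \<in> P \<Longrightarrow> b \<in> P \<Longrightarrow> V a \<circ> V b = V (gm b a)"
  using V_mult by blast

lemma adj_adj_V: "a \<in> P \<Longrightarrow> adj (adj (V a)) = V a"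
  by (simp add: adj_adj bop_V)

lemma V_e: "V e = Id_op"
proof -
  have "V e = adj (V e) \<circ> (V e \<circ> V e)" by (simp add: adj_V_comp_V_comp e_in_P bop_V)
  also have "V e \<circ> V e = V e" using V_comp_V[OF e_in_P e_in_P] by simp
  finally show ?thesis using adj_V_comp_V[OF e_in_P] by simp
qed

definition range_proj :: "'g \<Rightarrow> 'i op" where
  "range_proj a = V a \<circ> adj (V a)"

lemma range_proj_e: "range_proj e = Id_op"
  by (simp add: range_proj_def V_e adj_Id_op comp_Id_op bop_Id_op)

lemma range_proj_comp: "V a \<circ> (adj (V a) \<circ> X) = range_proj a \<circ> X"
  by (simp add: range_proj_def comp_assoc)

lemma range_proj_commute:
  "a \<in> P \<Longrightarrow> b \<in> P \<Longrightarrow> range_proj a \<circ> (range_proj b \<circ> X) = range_proj b \<circ> (range_proj a \<circ> X)"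
  using V_commuting by (simp add: range_proj_def comp_assoc[symmetric])

lemma range_proj_comp_V: "a \<in> P \<Longrightarrow> range_proj a \<circ> V a = V a"
  by (simp add: range_proj_def comp_assoc adj_V_comp_V comp_Id_op bop_V)

lemma range_proj_idem: "a \<in> P \<Longrightarrow> range_proj a \<circ> range_proj a = range_proj a"
  by (metis range_proj_def range_proj_comp_V comp_assoc)

lemma adj_V_comp_V_eq_stretch:
  assumes "a \<in> P" "b \<in> P" "p \<in> P"
  shows "adj (V b) \<circ> V a = adj (V (gm b p)) \<circ> V (gm a p)"
  using assms by (simp add: V_comp_V[symmetric] adj_comp bop_V comp_assoc adj_V_comp_V_comp)

text \<open>The Ore condition makes W well defined: two quotients representing the same group element
  have a common extension within P.\<close>

lemma adj_V_comp_V_eq: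
  assumes "a \<in> P" "b \<in> P" "c \<in> P" "d \<in> P" "gm a (ginv b) = gm c (ginv d)"
  shows "adj (V b) \<circ> V a = adj (V d) \<circ> V c"
proof -
  obtain p q where pq: "p \<in> P" "q \<in> P" "gm b p = gm d q" using P_Ore[OF assms(2,4)] by blast
  have "gm a p = gm (gm a (ginv b)) (gm b p)" by (simp add: G.assoc)
  also have "\<dots> = gm c q" using assms(5) pq(3) by (simp add: G.assoc)
  finally have "gm a p = gm c q" .
  thus ?thesis
    using adj_V_comp_V_eq_stretch[of a b p] adj_V_comp_V_eq_stretch[of c d q] assms pq by simp
qed

lemma W_quotient: "a \<in> P \<Longrightarrow> b \<in> P \<Longrightarrow> W (gm a (ginv b)) = adj (V b) \<circ> V a"
  unfolding Wop_def by (rule someI2[where Q="\<lambda>T. T = adj (V b) \<circ> V a"]) (auto intro: adj_V_comp_V_eq)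

lemma bop_W: "bop (W g)"
  by (metis obtain_P_quotient W_quotient bop_comp bop_V bop_adj_V)

lemma E_quotient:
  "a \<in> P \<Longrightarrow> b \<in> P \<Longrightarrow> E (gm a (ginv b)) = adj (V b) \<circ> (range_proj a \<circ> V b)"
  by (simp add: Eop_def W_quotient adj_comp bop_V bop_adj_V adj_adj_V range_proj_def comp_assoc)

lemma bop_E: "bop (E g)"
  by (simp add: Eop_def bop_comp bop_W bop_adj)

lemma adj_E: "adj (E g) = E g"
  by (simp add: Eop_def adj_comp bop_W bop_adj adj_adj)

lemma E_e: "E e = Id_op"
  using E_quotient[OF e_in_P e_in_P] by (simp add: range_proj_e V_e adj_Id_op comp_Id_op bop_Id_op)

lemma E_P: "a \<in> P \<Longrightarrow> E a = range_proj a"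
  using E_quotient[OF _ e_in_P, of a]
  by (simp add: V_e adj_Id_op comp_Id_op Id_op_comp range_proj_def bop_comp bop_V bop_adj_V)

lemma E_commute: "E g \<circ> E h = E h \<circ> E g"
proof -
  obtain c d where cd: "c \<in> P" "d \<in> P" "g = gm c (ginv d)" using obtain_P_quotient by blast
  obtain x y where xy: "x \<in> P" "y \<in> P" "h = gm x (ginv y)" using obtain_P_quotient by blast
  obtain p q where pq: "p \<in> P" "q \<in> P" "gm d p = gm y q" using P_Ore[OF cd(2) xy(2)] by blast
  define m where "m = gm d p"
  have m: "m \<in> P" by (simp add: m_def P_mult cd(2) pq(1))
  have g: "g = gm (gm c p) (ginv m)" by (simp add: cd m_def G.inverse_distrib_swap G.assoc)
  have h: "h = gm (gm x q) (ginv m)" by (simp add: xy m_def pq G.inverse_distrib_swap G.assoc)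
  have u: "gm c p \<in> P" "gm x q \<in> P" using P_mult cd xy pq by auto
  have "E g \<circ> E h = adj (V m) \<circ> (range_proj (gm c p) \<circ> (range_proj m \<circ> (range_proj (gm x q) \<circ> V m)))"
    using u m by (simp add: g h E_quotient comp_assoc range_proj_comp)
  also have "\<dots> = adj (V m) \<circ> (range_proj (gm x q) \<circ> (range_proj m \<circ> (range_proj (gm c p) \<circ> V m)))"
    using u m by (metis range_proj_commute)
  also have "\<dots> = E h \<circ> E g"
    using u m by (simp add: g h E_quotient comp_assoc range_proj_comp)
  finally show ?thesis .
qed

lemma sandwich_V_E:
  assumes a: "a \<in> P"
  shows "sandwich (V a) (E g) = E a \<circ> E (gm g a)"
proof -
  obtain c d where cd: "c \<in> P" "d \<in> P" "g = gm c (ginv d)" using obtain_P_quotient by blast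
  obtain p q where pq: "p \<in> P" "q \<in> P" "gm d p = gm a q" using P_Ore[OF cd(2) a] by blast
  have cp: "gm c p \<in> P" using P_mult cd pq by auto
  have g: "g = gm (gm c p) (ginv (gm a q))"
    by (simp add: cd pq(3)[symmetric] G.inverse_distrib_swap G.assoc)
  have ga: "gm g a = gm (gm c p) (ginv q)"
    by (simp add: g G.inverse_distrib_swap G.assoc)
  have "sandwich (V a) (E g) = range_proj a \<circ> (E (gm g a) \<circ> range_proj a)"
    unfolding sandwich_def ga unfolding g E_quotient[OF cp P_mult[OF a pq(2)]] E_quotient[OF cp pq(2)]
      V_comp_V[OF pq(2) a, symmetric]
    by (simp add: adj_comp bop_V a pq(2) comp_assoc range_proj_comp flip: range_proj_def)
  also have "\<dots> = range_proj a \<circ> (range_proj a \<circ> E (gm g a))"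
    using E_commute[of "gm g a" a] a by (simp add: E_P)
  also have "\<dots> = E a \<circ> E (gm g a)"
    using a by (simp add: comp_assoc[symmetric] range_proj_idem E_P)
  finally show ?thesis .
qed

lemma sandwich_adj_V_E:
  assumes c: "c \<in> P"
  shows "sandwich (adj (V c)) (E g) = E (gm g (ginv c))"
proof -
  obtain x y where xy: "x \<in> P" "y \<in> P" "g = gm x (ginv y)" using obtain_P_quotient by blast
  have "gm g (ginv c) = gm x (ginv (gm c y))"
    by (simp add: xy G.inverse_distrib_swap G.assoc)
  thus ?thesis
    using c xy
    by (simp add: sandwich_def adj_adj_V E_quotient P_mult V_comp_V[symmetric] adj_comp bop_V comp_assoc)
qed

lemma bop_Aalg: "T \<in> \<A> \<Longrightarrow> bop T"
  and E_mem_Aalg: "E g \<in> \<A>"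
  and Id_op_mem_Aalg: "Id_op \<in> \<A>"
  and comp_mem_Aalg: "T \<in> \<A> \<Longrightarrow> U \<in> \<A> \<Longrightarrow> T \<circ> U \<in> \<A>"
proof -
  have A: "cstar_closed (range E) \<A>"
    unfolding Aalg_def by (rule cstar_closed_cstar_gen) (auto intro: bop_E)
  show "T \<in> \<A> \<Longrightarrow> bop T" by (rule cstar_closed_bop[OF A])
  show "E g \<in> \<A>" using cstar_closed_generators[OF A] by blast
  show "Id_op \<in> \<A>" by (rule cstar_closed_Id_op[OF A])
  show "T \<in> \<A> \<Longrightarrow> U \<in> \<A> \<Longrightarrow> T \<circ> U \<in> \<A>" by (rule cstar_closed_comp[OF A])
qed

lemma Aalg_commute_E: "T \<in> \<A> \<Longrightarrow> T \<circ> E g = E g \<circ> T"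
  unfolding Aalg_def by (rule cstar_gen_commute) (auto intro: bop_E adj_E E_commute)

lemma sandwich_V_cancel:
  "a \<in> P \<Longrightarrow> bop U \<Longrightarrow> adj (V a) \<circ> (V a \<circ> (U \<circ> adj (V a))) = U \<circ> adj (V a)"
  by (simp add: adj_V_comp_V_comp bop_comp bop_adj_V)

lemma sandwich_adj_V_cancel:
  assumes c: "c \<in> P" and U: "U \<in> \<A>"
  shows "adj (adj (V c)) \<circ> (adj (V c) \<circ> (U \<circ> adj (adj (V c)))) = U \<circ> adj (adj (V c))"
proof -
  have "range_proj c \<circ> (U \<circ> V c) = U \<circ> (range_proj c \<circ> V c)"
    using Aalg_commute_E[OF U, of c] c by (simp add: E_P) (metis comp_assoc)
  thus ?thesis using c by (simp add: adj_adj_V range_proj_comp range_proj_comp_V)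
qed

lemma sandwich_V_mem_Aalg:
  assumes a: "a \<in> P" and T: "T \<in> \<A>"
  shows "sandwich (V a) T \<in> \<A>"
  unfolding Aalg_def
proof (rule sandwich_mem_cstar_gen[OF _ bop_V[OF a]])
  show "range E \<subseteq> Collect bop" by (auto intro: bop_E)
  show "V a \<circ> adj (V a) \<in> cstar_gen (range E)"
    using E_mem_Aalg[of a] a by (simp add: Aalg_def E_P range_proj_def)
  show "sandwich (V a) T \<in> cstar_gen (range E)" if "T \<in> range E" for T
    using that comp_mem_Aalg[OF E_mem_Aalg E_mem_Aalg] by (auto simp: sandwich_V_E[OF a] Aalg_def)
  show "adj (V a) \<circ> (V a \<circ> (U \<circ> adj (V a))) = U \<circ> adj (V a)" if "U \<in> cstar_gen (range E)" for U
    using that bop_Aalg by (simp add: sandwich_V_cancel a Aalg_def)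
  show "T \<in> cstar_gen (range E)" using T by (simp add: Aalg_def)
qed

lemma sandwich_adj_V_mem_Aalg:
  assumes c: "c \<in> P" and T: "T \<in> \<A>"
  shows "sandwich (adj (V c)) T \<in> \<A>"
  unfolding Aalg_def
proof (rule sandwich_mem_cstar_gen[OF _ bop_adj_V[OF c]])
  show "range E \<subseteq> Collect bop" by (auto intro: bop_E)
  show "adj (V c) \<circ> adj (adj (V c)) \<in> cstar_gen (range E)"
    using Id_op_mem_Aalg c by (simp add: Aalg_def adj_adj_V adj_V_comp_V)
  show "sandwich (adj (V c)) T \<in> cstar_gen (range E)" if "T \<in> range E" for T
    using that E_mem_Aalg by (auto simp: sandwich_adj_V_E[OF c] Aalg_def)
  show "adj (adj (V c)) \<circ> (adj (V c) \<circ> (U \<circ> adj (adj (V c)))) = U \<circ> adj (adj (V c))"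
    if "U \<in> cstar_gen (range E)" for U
    using that by (simp add: sandwich_adj_V_cancel c Aalg_def)
  show "T \<in> cstar_gen (range E)" using T by (simp add: Aalg_def)
qed

section \<open>The spectrum as a subset of P(G)\<close>

lemma mem_rtrans_iff: "g \<in> rtrans gm X h \<longleftrightarrow> gm g (ginv h) \<in> X"
proof
  assume "g \<in> rtrans gm X h"
  then obtain x where "x \<in> X" "g = gm x h" by (auto simp: rtrans_def)
  thus "gm g (ginv h) \<in> X" by (simp add: G.assoc)
next
  assume "gm g (ginv h) \<in> X"
  moreover have "g = gm (gm g (ginv h)) h" by (simp add: G.assoc)
  ultimately show "g \<in> rtrans gm X h" unfolding rtrans_def by blast
qed

lemma rtrans_rtrans: "rtrans gm (rtrans gm X h) k = rtrans gm X (gm h k)"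
  by (simp add: rtrans_def image_image G.assoc)

lemma rtrans_e: "rtrans gm X e = X"
  by (simp add: rtrans_def)

lemma character_Id_op:
  assumes chr: "chr \<in> characters \<A>"
  shows "chr Id_op = 1"
proof -
  obtain T where T: "T \<in> \<A>" "chr T \<noteq> 0" using chr by (auto simp: characters_def)
  have "chr (T \<circ> Id_op) = chr T * chr Id_op"
    using chr T(1) Id_op_mem_Aalg by (simp add: characters_def)
  moreover have "T \<circ> Id_op = T" using bop_Aalg[OF T(1)] by (rule comp_Id_op)
  ultimately show ?thesis using T(2) by simp
qed

lemma mem_Omega_iff: "X \<in> \<Omega> \<longleftrightarrow> (\<exists>chr \<in> characters \<A>. X = {g. chr (E g) = 1})"
  unfolding Omega_def by blast

lemma e_mem_Omega: "X \<in> \<Omega> \<Longrightarrow> e \<in> X"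
  unfolding mem_Omega_iff using character_Id_op by (auto simp: E_e)

lemma sandwich_character_mem_Omega:
  assumes chr: "chr \<in> characters \<A>" and L: "bop L"
    and maps: "\<And>T. T \<in> \<A> \<Longrightarrow> sandwich L T \<in> \<A>"
    and cancel: "\<And>U. U \<in> \<A> \<Longrightarrow> adj L \<circ> (L \<circ> (U \<circ> adj L)) = U \<circ> adj L"
    and nonzero: "chr (L \<circ> adj L) \<noteq> 0"
  shows "{g. chr (sandwich L (E g)) = 1} \<in> \<Omega>"
proof -
  have "(\<lambda>T. chr (sandwich L T)) \<in> characters \<A>"
  proof (rule characters_comp[OF chr maps _ _ _ Id_op_mem_Aalg])
    show "sandwich L (op_add T U) = op_add (sandwich L T) (sandwich L U)" if "T \<in> \<A>" "U \<in> \<A>" for T U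
      using that by (simp add: sandwich_op_add L bop_Aalg)
    show "sandwich L (T \<circ> U) = sandwich L T \<circ> sandwich L U" if "T \<in> \<A>" "U \<in> \<A>" for T U
      using that by (simp add: sandwich_comp L bop_Aalg cancel)
    show "sandwich L (op_scale c T) = op_scale c (sandwich L T)" if "T \<in> \<A>" for c T
      using that by (simp add: sandwich_op_scale L bop_Aalg)
    show "chr (sandwich L Id_op) \<noteq> 0" using nonzero by (simp add: sandwich_Id_op L)
  qed
  thus ?thesis unfolding mem_Omega_iff by (rule bexI[rotated]) simp
qed

lemma rtrans_inv_mem_Omega:
  assumes a: "a \<in> P" and X: "X \<in> \<Omega>" and aX: "a \<in> X"
  shows "rtrans gm X (ginv a) \<in> \<Omega>"
proof -
  obtain chr where chr: "chr \<in> characters \<A>" and X_eq: "X = {g. chr (E g) = 1}"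
    using X mem_Omega_iff by blast
  have chr_E_a: "chr (E a) = 1" using aX X_eq by simp
  have "{g. chr (sandwich (V a) (E g)) = 1} \<in> \<Omega>"
    using chr_E_a a
    by (intro sandwich_character_mem_Omega[OF chr bop_V[OF a]] sandwich_V_mem_Aalg sandwich_V_cancel)
       (simp_all add: bop_Aalg E_P range_proj_def)
  moreover have "chr (sandwich (V a) (E g)) = chr (E (gm g a))" for g
    using chr chr_E_a by (simp add: sandwich_V_E[OF a] characters_def E_mem_Aalg)
  moreover have "rtrans gm X (ginv a) = {g. chr (E (gm g a)) = 1}"
    by (rule set_eqI) (simp add: mem_rtrans_iff X_eq)
  ultimately show ?thesis by simp
qed

lemma rtrans_P_mem_Omega:
  assumes c: "c \<in> P" and X: "X \<in> \<Omega>"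
  shows "rtrans gm X c \<in> \<Omega>"
proof -
  obtain chr where chr: "chr \<in> characters \<A>" and X_eq: "X = {g. chr (E g) = 1}"
    using X mem_Omega_iff by blast
  have "{g. chr (sandwich (adj (V c)) (E g)) = 1} \<in> \<Omega>"
    using c character_Id_op[OF chr]
    by (intro sandwich_character_mem_Omega[OF chr bop_adj_V[OF c]] sandwich_adj_V_mem_Aalg
        sandwich_adj_V_cancel)
       (simp_all add: adj_adj_V adj_V_comp_V)
  moreover have "rtrans gm X c = {g. chr (sandwich (adj (V c)) (E g)) = 1}"
    by (rule set_eqI) (simp add: sandwich_adj_V_E[OF c] mem_rtrans_iff X_eq)
  ultimately show ?thesis by simp
qed

lemma rtrans_inv_mem_Omega_iff:
  assumes "X \<in> \<Omega>" "a \<in> P"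
  shows "rtrans gm X (ginv a) \<in> \<Omega> \<longleftrightarrow> a \<in> X"
proof
  assume "rtrans gm X (ginv a) \<in> \<Omega>"
  hence "e \<in> rtrans gm X (ginv a)" by (rule e_mem_Omega)
  thus "a \<in> X" by (simp add: mem_rtrans_iff)
qed (rule rtrans_inv_mem_Omega[OF assms(2,1)])

lemma rtrans_mem_Omega_iff:
  assumes X: "X \<in> \<Omega>"
  shows "rtrans gm X g \<in> \<Omega> \<longleftrightarrow> ginv g \<in> X"
proof
  assume "rtrans gm X g \<in> \<Omega>"
  hence "e \<in> rtrans gm X g" by (rule e_mem_Omega)
  thus "ginv g \<in> X" by (simp add: mem_rtrans_iff)
next
  assume g: "ginv g \<in> X"
  obtain c d where cd: "c \<in> P" "d \<in> P" "g = gm c (ginv d)" using obtain_P_quotient by blast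
  have "d \<in> rtrans gm X c" using g by (simp add: mem_rtrans_iff cd(3) G.inverse_distrib_swap)
  hence "rtrans gm (rtrans gm X c) (ginv d) \<in> \<Omega>"
    using rtrans_inv_mem_Omega[OF cd(2) rtrans_P_mem_Omega[OF cd(1) X]] by blast
  thus "rtrans gm X g \<in> \<Omega>" by (simp add: rtrans_rtrans cd(3))
qed

lemma rtrans_image_Omega:
  assumes a: "a \<in> P"
  shows "(\<lambda>A. rtrans gm A a) ` (Y \<inter> \<Omega>) = {B. a \<in> B \<and> rtrans gm B (ginv a) \<in> Y} \<inter> \<Omega>"
proof (intro equalityI subsetI)
  fix B assume "B \<in> (\<lambda>A. rtrans gm A a) ` (Y \<inter> \<Omega>)"
  then obtain A where A: "A \<in> Y" "A \<in> \<Omega>" "B = rtrans gm A a" by blast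
  have "a \<in> B" using e_mem_Omega[OF A(2)] by (simp add: A(3) mem_rtrans_iff)
  moreover have "rtrans gm B (ginv a) = A" by (simp add: A(3) rtrans_rtrans rtrans_e)
  ultimately show "B \<in> {B. a \<in> B \<and> rtrans gm B (ginv a) \<in> Y} \<inter> \<Omega>"
    using A rtrans_P_mem_Omega[OF a A(2)] by simp
next
  fix B assume B: "B \<in> {B. a \<in> B \<and> rtrans gm B (ginv a) \<in> Y} \<inter> \<Omega>"
  hence "rtrans gm B (ginv a) \<in> Y \<inter> \<Omega>" using rtrans_inv_mem_Omega[OF a] by blast
  moreover have "B = rtrans gm (rtrans gm B (ginv a)) a" by (simp add: rtrans_rtrans rtrans_e)
  ultimately show "B \<in> (\<lambda>A. rtrans gm A a) ` (Y \<inter> \<Omega>)" by blast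
qed

end

section \<open>The topology of P(G)\<close>

definition char_fun :: "'g set \<Rightarrow> 'g \<Rightarrow> bool" where
  "char_fun A = (\<lambda>g. g \<in> A)"

lemma inj_char_fun: "inj char_fun"
  by (rule injI) (auto simp: char_fun_def fun_eq_iff)

lemma char_fun_image: "char_fun ` Q = {f. Collect f \<in> Q}"
proof (intro equalityI subsetI)
  fix f assume "f \<in> {f. Collect f \<in> Q}"
  moreover have "f = char_fun (Collect f)" by (simp add: char_fun_def)
  ultimately show "f \<in> char_fun ` Q" by blast
qed (auto simp: char_fun_def)

lemma openin_powset_top: "openin powset_top U \<longleftrightarrow> open (char_fun ` U)"
proof -
  have "istopology (\<lambda>U. open (char_fun ` U))"
    unfolding istopology_def
  proof (intro conjI allI impI)
    show "open (char_fun ` (S \<inter> T))" if "open (char_fun ` S)" "open (char_fun ` T)" for S T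
      using that by (simp add: image_Int[OF inj_char_fun] open_Int)
    show "open (char_fun ` \<Union>K)" if "\<forall>S\<in>K. open (char_fun ` S)" for K
      using that unfolding image_Union by (intro open_UN) blast
  qed
  hence ist: "istopology (\<lambda>U. open ((\<lambda>A g. g \<in> A) ` U))" by (simp add: char_fun_def[abs_def])
  show ?thesis unfolding powset_top_def topology_inverse'[OF ist] by (simp add: char_fun_def[abs_def])
qed

lemma open_coordinate: "open {f :: 'g \<Rightarrow> bool. f a}"
proof -
  have "open ((\<lambda>f :: 'g \<Rightarrow> bool. f a) -` {True})"
    by (rule open_vimage) (simp_all add: open_discrete)
  thus ?thesis by (simp add: vimage_def)
qed

lemma open_vimage_precompose:
  fixes h :: "'g \<Rightarrow> 'g"
  assumes "open Y"
  shows "open ((\<lambda>f :: 'g \<Rightarrow> bool. \<lambda>g. f (h g)) -` Y)"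
  by (rule open_vimage[OF assms]) (intro continuous_on_coordinatewise_then_product, simp)

context commuting_isometric_rep
begin

lemma openin_rtrans_image:
  assumes U: "openin (subtopology powset_top \<Omega>) U" and a: "a \<in> P"
  shows "openin (subtopology powset_top \<Omega>) ((\<lambda>A. rtrans gm A a) ` U)"
proof -
  obtain Y where Y: "openin powset_top Y" "U = Y \<inter> \<Omega>" using U by (auto simp: openin_subtopology)
  define Q where "Q = {B. a \<in> B \<and> rtrans gm B (ginv a) \<in> Y}"
  have "f \<in> char_fun ` Q \<longleftrightarrow> f \<in> {f. f a} \<inter> (\<lambda>f g. f (gm g a)) -` (char_fun ` Y)" for f
  proof -
    have shift: "char_fun (rtrans gm (Collect f) (ginv a)) = (\<lambda>g. f (gm g a))"
      by (simp add: char_fun_def mem_rtrans_iff)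
    have "f \<in> char_fun ` Q \<longleftrightarrow> f a \<and> rtrans gm (Collect f) (ginv a) \<in> Y"
      by (simp add: char_fun_image Q_def)
    also have "\<dots> \<longleftrightarrow> f a \<and> char_fun (rtrans gm (Collect f) (ginv a)) \<in> char_fun ` Y"
      by (simp only: inj_image_mem_iff[OF inj_char_fun])
    finally show ?thesis unfolding shift by simp
  qed
  hence "char_fun ` Q = {f. f a} \<inter> (\<lambda>f g. f (gm g a)) -` (char_fun ` Y)" by blast
  also have "open \<dots>"
    using Y(1) unfolding openin_powset_top by (intro open_Int open_coordinate open_vimage_precompose)
  finally have "openin powset_top Q" by (simp add: openin_powset_top)
  thus ?thesis
    unfolding Y(2) rtrans_image_Omega[OF a] Q_def[symmetric] openin_subtopology by blast
qed

lemma open_map_rtrans: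
  "open_map (prod_topology (subtopology powset_top \<Omega>) (discrete_topology P))
     (subtopology powset_top \<Omega>) (\<lambda>(A, a). rtrans gm A a)"
  unfolding open_map_def
proof (intro allI impI)
  fix S assume S: "openin (prod_topology (subtopology powset_top \<Omega>) (discrete_topology P)) S"
  show "openin (subtopology powset_top \<Omega>) ((\<lambda>(A, a). rtrans gm A a) ` S)"
  proof (subst openin_subopen, intro ballI)
    fix B assume "B \<in> (\<lambda>(A, a). rtrans gm A a) ` S"
    then obtain A a where Aa: "(A, a) \<in> S" "B = rtrans gm A a" by auto
    obtain U W where UW: "openin (subtopology powset_top \<Omega>) U" "openin (discrete_topology P) W"
      "A \<in> U" "a \<in> W" "U \<times> W \<subseteq> S"
    proof -
      have "\<forall>x y. (x, y) \<in> S \<longrightarrow> (\<exists>U W. openin (subtopology powset_top \<Omega>) U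
          \<and> openin (discrete_topology P) W \<and> x \<in> U \<and> y \<in> W \<and> U \<times> W \<subseteq> S)"
        using S by (simp only: openin_prod_topology_alt)
      from this[rule_format, OF Aa(1)] show ?thesis using that by blast
    qed
    have a: "a \<in> P" using UW(2,4) by auto
    have "(\<lambda>A. rtrans gm A a) ` U \<subseteq> (\<lambda>(A, a). rtrans gm A a) ` S"
      using UW(4,5) by (auto intro!: image_eqI)
    moreover have "B \<in> (\<lambda>A. rtrans gm A a) ` U" using Aa(2) UW(3) by blast
    ultimately show "\<exists>T. openin (subtopology powset_top \<Omega>) T \<and> B \<in> T
        \<and> T \<subseteq> (\<lambda>(A, a). rtrans gm A a) ` S"
      using openin_rtrans_image[OF UW(1) a] by blast
  qed
qed

end

theorem mainTheorem4:
  fixes gm :: "'g \<Rightarrow> 'g \<Rightarrow> 'g" and e :: 'g and ginv :: "'g \<Rightarrow> 'g"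
    and P :: "'g set" and V :: "'g \<Rightarrow> 'i op"
  assumes grp: "group gm e ginv"
    and P_semigroup: "\<forall>a\<in>P. \<forall>b\<in>P. gm a b \<in> P"
    and e_in_P: "e \<in> P"
    and P_generates: "{gm a (ginv b) | a b. a \<in> P \<and> b \<in> P} = UNIV"
    and V_isom: "\<forall>a\<in>P. isometry (V a)"
    and V_mult: "\<forall>a\<in>P. \<forall>b\<in>P. V a \<circ> V b = V (gm b a)"
    and V_commuting: "\<forall>a\<in>P. \<forall>b\<in>P.
           (V a \<circ> adj (V a)) \<circ> (V b \<circ> adj (V b)) = (V b \<circ> adj (V b)) \<circ> (V a \<circ> adj (V a))"
  shows "(\<forall>A\<in>Omega gm ginv P V. \<forall>a\<in>P.
            rtrans gm A (ginv a) \<in> Omega gm ginv P V \<longleftrightarrow> a \<in> A)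
       \<and> (\<forall>A\<in>Omega gm ginv P V. \<forall>g.
            rtrans gm A g \<in> Omega gm ginv P V \<longleftrightarrow> ginv g \<in> A)
       \<and> open_map
           (prod_topology (subtopology powset_top (Omega gm ginv P V)) (discrete_topology P))
           (subtopology powset_top (Omega gm ginv P V))
           (\<lambda>(A, a). rtrans gm A a)"
proof -
  interpret commuting_isometric_rep gm e ginv P V
    unfolding commuting_isometric_rep_def using assms by blast
  show ?thesis
    using rtrans_inv_mem_Omega_iff rtrans_mem_Omega_iff open_map_rtrans by simp
qed

end
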